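(* Let $R$ be a commutative noetherian ring, $M$ any $R$-module and $N$ a finitely generated $R$-module. Then $\operatorname{Att}_R(M\otimes_R N)=\operatorname{Att}_R(M)\cap\operatorname{Supp}_R(N)$.
   Context: A prime ideal $\mathfrak{p}$ is attached to an $R$-module $M$ if $\mathfrak{p}=\operatorname{Ann}_R(M/U)$ for some submodule $U\subseteq M$, equivalently $\mathfrak{p}=\operatorname{Ann}_R(M/\mathfrak{p}M)$; $\operatorname{Att}_R(M)$ denotes the set of attached primes. *)

theory Defs
  imports "HOL-Algebra.Algebra"
begin

text \<open>Ann_R(M/U) for a submodule U of M, written out without forming the quotient.\<close>
definition ann_quot :: "('a, 'r) ring_scheme \<Rightarrow> ('a, 'm, 'x) module_scheme \<Rightarrow> 'm set \<Rightarrow> 'a set" where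
  "ann_quot R M U = {r \<in> carrier R. \<forall>x \<in> carrier M. r \<odot>\<^bsub>M\<^esub> x \<in> U}"

definition Att :: "('a, 'r) ring_scheme \<Rightarrow> ('a, 'm, 'x) module_scheme \<Rightarrow> 'a set set" where
  "Att R M = {P. primeideal P R \<and> (\<exists>U. submodule U R M \<and> P = ann_quot R M U)}"

text \<open>Support: primes p with N_p \<noteq> 0. An element x/s of N_p is zero iff t x = 0 for
  some t outside p, so N_p \<noteq> 0 iff some x in N is killed by no t outside p.\<close>
definition Supp :: "('a, 'r) ring_scheme \<Rightarrow> ('a, 'm, 'x) module_scheme \<Rightarrow> 'a set set" where
  "Supp R N = {P. primeideal P R \<and>
     (\<exists>x \<in> carrier N. \<forall>t \<in> carrier R - P. t \<odot>\<^bsub>N\<^esub> x \<noteq> \<zero>\<^bsub>N\<^esub>)}"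

definition fin_gen_module :: "('a, 'r) ring_scheme \<Rightarrow> ('a, 'm, 'x) module_scheme \<Rightarrow> bool" where
  "fin_gen_module R N \<longleftrightarrow> (\<exists>S. finite S \<and> S \<subseteq> carrier N \<and>
     (\<forall>x \<in> carrier N. \<exists>a. a \<in> S \<rightarrow> carrier R \<and> x = (\<Oplus>\<^bsub>N\<^esub> s \<in> S. a s \<odot>\<^bsub>N\<^esub> s)))"

definition free_mod :: "('a, 'r) ring_scheme \<Rightarrow> 'c set \<Rightarrow> ('a, 'c \<Rightarrow> 'a) module" where
  "free_mod R A = \<lparr>carrier = {f. (\<forall>x. f x \<in> carrier R) \<and> finite {x. f x \<noteq> \<zero>\<^bsub>R\<^esub>}
                                     \<and> {x. f x \<noteq> \<zero>\<^bsub>R\<^esub>} \<subseteq> A},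
                   monoid.mult = (\<lambda>f g. undefined), one = undefined,
                   ring.zero = (\<lambda>x. \<zero>\<^bsub>R\<^esub>),
                   ring.add = (\<lambda>f g x. f x \<oplus>\<^bsub>R\<^esub> g x),
                   module.smult = (\<lambda>r f x. r \<otimes>\<^bsub>R\<^esub> f x)\<rparr>"

definition delta :: "('a, 'r) ring_scheme \<Rightarrow> 'c \<Rightarrow> 'c \<Rightarrow> 'a" where
  "delta R c = (\<lambda>x. if x = c then \<one>\<^bsub>R\<^esub> else \<zero>\<^bsub>R\<^esub>)"

definition tensor_rels :: "('a, 'r) ring_scheme \<Rightarrow> ('a, 'm, 'x) module_scheme \<Rightarrow> ('a, 'n, 'y) module_scheme
    \<Rightarrow> ('m \<times> 'n \<Rightarrow> 'a) set" where
  "tensor_rels R M N =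
     {(\<lambda>z. delta R (m \<oplus>\<^bsub>M\<^esub> m', n) z \<ominus>\<^bsub>R\<^esub> delta R (m, n) z \<ominus>\<^bsub>R\<^esub> delta R (m', n) z)
        | m m' n. m \<in> carrier M \<and> m' \<in> carrier M \<and> n \<in> carrier N}
   \<union> {(\<lambda>z. delta R (m, n \<oplus>\<^bsub>N\<^esub> n') z \<ominus>\<^bsub>R\<^esub> delta R (m, n) z \<ominus>\<^bsub>R\<^esub> delta R (m, n') z)
        | m n n'. m \<in> carrier M \<and> n \<in> carrier N \<and> n' \<in> carrier N}
   \<union> {(\<lambda>z. delta R (r \<odot>\<^bsub>M\<^esub> m, n) z \<ominus>\<^bsub>R\<^esub> r \<otimes>\<^bsub>R\<^esub> delta R (m, n) z)
        | r m n. r \<in> carrier R \<and> m \<in> carrier M \<and> n \<in> carrier N}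
   \<union> {(\<lambda>z. delta R (m, r \<odot>\<^bsub>N\<^esub> n) z \<ominus>\<^bsub>R\<^esub> r \<otimes>\<^bsub>R\<^esub> delta R (m, n) z)
        | r m n. r \<in> carrier R \<and> m \<in> carrier M \<and> n \<in> carrier N}"

definition tensor_kernel :: "('a, 'r) ring_scheme \<Rightarrow> ('a, 'm, 'x) module_scheme \<Rightarrow> ('a, 'n, 'y) module_scheme
    \<Rightarrow> ('m \<times> 'n \<Rightarrow> 'a) set" where
  "tensor_kernel R M N =
     \<Inter>{U. submodule U R (free_mod R (carrier M \<times> carrier N)) \<and> tensor_rels R M N \<subseteq> U}"

definition tensor_cls :: "('a, 'r) ring_scheme \<Rightarrow> ('a, 'm, 'x) module_scheme \<Rightarrow> ('a, 'n, 'y) module_scheme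
    \<Rightarrow> ('m \<times> 'n \<Rightarrow> 'a) \<Rightarrow> ('m \<times> 'n \<Rightarrow> 'a) set" where
  "tensor_cls R M N f = {g \<in> carrier (free_mod R (carrier M \<times> carrier N)).
      (\<lambda>z. g z \<ominus>\<^bsub>R\<^esub> f z) \<in> tensor_kernel R M N}"

definition tensor :: "('a, 'r) ring_scheme \<Rightarrow> ('a, 'm, 'x) module_scheme \<Rightarrow> ('a, 'n, 'y) module_scheme
    \<Rightarrow> ('a, ('m \<times> 'n \<Rightarrow> 'a) set) module" where
  "tensor R M N = \<lparr>carrier = tensor_cls R M N ` carrier (free_mod R (carrier M \<times> carrier N)),
      monoid.mult = (\<lambda>C D. undefined), one = undefined,
      ring.zero = tensor_cls R M N (\<lambda>z. \<zero>\<^bsub>R\<^esub>),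
      ring.add = (\<lambda>C D. {g \<in> carrier (free_mod R (carrier M \<times> carrier N)).
                \<exists>f \<in> C. \<exists>h \<in> D. (\<lambda>z. g z \<ominus>\<^bsub>R\<^esub> (f z \<oplus>\<^bsub>R\<^esub> h z)) \<in> tensor_kernel R M N}),
      module.smult = (\<lambda>r C. {g \<in> carrier (free_mod R (carrier M \<times> carrier N)).
                \<exists>f \<in> C. (\<lambda>z. g z \<ominus>\<^bsub>R\<^esub> r \<otimes>\<^bsub>R\<^esub> f z) \<in> tensor_kernel R M N})\<rparr>"

end

theory Submission
  imports Defs
begin

text \<open>
  For a submodule \<open>U\<close> of \<open>M \<otimes> N\<close>, an element of \<open>R\<close> kills \<open>(M \<otimes> N)/U\<close> iff it kills every pure
  tensor modulo \<open>U\<close>, so \<open>Ann((M \<otimes> N)/U) = Ann(M/U')\<close> with \<open>U' = {m. m \<otimes> N \<subseteq> U}\<close>. If moreover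
  this annihilator \<open>P\<close> were not in \<open>Supp N\<close>, some element outside \<open>P\<close> would annihilate the finitely
  generated \<open>N\<close>, hence \<open>M \<otimes> N\<close>, hence lie in \<open>P\<close>.
  Conversely, let \<open>P = Ann(M/U)\<close> and \<open>N\<^sub>P \<noteq> 0\<close>. Nakayama's lemma over \<open>R\<^sub>P\<close> yields a nonzero
  \<open>R\<close>-linear map \<open>\<phi> : N \<rightarrow> R/P\<close>; then \<open>m \<otimes> n \<mapsto> \<phi>(n) m\<close> is a well defined map \<open>M \<otimes> N \<rightarrow> M/U\<close>,
  and the quotient of \<open>M \<otimes> N\<close> by its kernel has annihilator exactly \<open>P\<close>.
\<close>

lemma primeideal_one_notin:
  assumes "primeideal P R"
  shows "\<one>\<^bsub>R\<^esub> \<notin> P"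
proof
  interpret P: primeideal P R by fact
  assume "\<one>\<^bsub>R\<^esub> \<in> P"
  then have "P = carrier R" by (rule P.one_imp_carrier)
  then show False using P.I_notcarr by simp
qed

lemma primeideal_mult_notin:
  assumes "primeideal P R" "a \<in> carrier R - P" "b \<in> carrier R - P"
  shows "a \<otimes>\<^bsub>R\<^esub> b \<in> carrier R - P"
proof -
  interpret P: primeideal P R by fact
  show ?thesis using P.I_prime assms(2,3) by auto
qed

lemma finite_subset_threshold:
  assumes "finite S" and "\<not> Q {}" and "Q S"
  obtains T g where "T \<subseteq> S" "\<not> Q T" "g \<in> S" "Q (insert g T)"
proof -
  have fin: "finite {T. T \<subseteq> S \<and> \<not> Q T}"
    by (rule finite_subset[of _ "Pow S"]) (use assms(1) in auto)
  have ne: "{T. T \<subseteq> S \<and> \<not> Q T} \<noteq> {}" using assms(2) by blast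
  obtain T where "T \<in> {T. T \<subseteq> S \<and> \<not> Q T}"
    and max: "\<forall>T' \<in> {T. T \<subseteq> S \<and> \<not> Q T}. T \<subseteq> T' \<longrightarrow> T = T'"
    using finite_has_maximal[OF fin ne] by (elim bexE)
  then have T: "T \<subseteq> S" "\<not> Q T" by blast+
  then have "T \<noteq> S" using assms(3) by metis
  then obtain g where "g \<in> S" "g \<notin> T" using T(1) by blast
  moreover from this have "Q (insert g T)" using max T(1) by blast
  ultimately show ?thesis using that T by blast
qed

section \<open>Generated submodules\<close>

lemma (in abelian_group) add_diff_diff_self:
  "a \<in> carrier G \<Longrightarrow> b \<in> carrier G \<Longrightarrow> a \<oplus> b \<ominus> a \<ominus> b = \<zero>"
proof -
  assume ab: "a \<in> carrier G" "b \<in> carrier G"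
  then have "a \<oplus> b \<ominus> a \<ominus> b = (a \<oplus> b) \<oplus> \<ominus> (a \<oplus> b)"
    by (simp add: a_minus_def minus_add a_assoc)
  then show ?thesis using ab by (simp add: r_neg)
qed

context module
begin

lemma smult_l_diff:
  "a \<in> carrier R \<Longrightarrow> b \<in> carrier R \<Longrightarrow> x \<in> carrier M \<Longrightarrow> (a \<ominus> b) \<odot>\<^bsub>M\<^esub> x = a \<odot>\<^bsub>M\<^esub> x \<ominus>\<^bsub>M\<^esub> b \<odot>\<^bsub>M\<^esub> x"
  by (simp add: a_minus_def smult_l_distr smult_l_minus)

lemma smult_diff_from_eq:
  assumes "w \<in> carrier M" "w' \<in> carrier M" "r \<in> carrier R" "r' \<in> carrier R" "g \<in> carrier M"
    and eq: "w \<oplus>\<^bsub>M\<^esub> r \<odot>\<^bsub>M\<^esub> g = w' \<oplus>\<^bsub>M\<^esub> r' \<odot>\<^bsub>M\<^esub> g"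
  shows "(r \<ominus> r') \<odot>\<^bsub>M\<^esub> g = w' \<ominus>\<^bsub>M\<^esub> w"
proof -
  have "(r \<ominus> r') \<odot>\<^bsub>M\<^esub> g = \<ominus>\<^bsub>M\<^esub> w \<oplus>\<^bsub>M\<^esub> (w \<oplus>\<^bsub>M\<^esub> r \<odot>\<^bsub>M\<^esub> g) \<oplus>\<^bsub>M\<^esub> \<ominus>\<^bsub>M\<^esub> (r' \<odot>\<^bsub>M\<^esub> g)"
    using assms(1-5) by (simp add: a_minus_def smult_l_distr smult_l_minus M.r_neg1)
  also have "\<dots> = w' \<ominus>\<^bsub>M\<^esub> w"
    using assms by (simp add: eq M.minus_eq M.a_ac M.r_neg)
  finally show ?thesis .
qed

lemma submodule_zero_closed: "submodule H R M \<Longrightarrow> \<zero>\<^bsub>M\<^esub> \<in> H"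
  using subgroup.one_closed[OF submodule.axioms(1)] by fastforce

lemma zero_submodule: "submodule {\<zero>\<^bsub>M\<^esub>} R M"
  by (rule submoduleI) auto

lemma submodule_Inter:
  assumes "\<H> \<noteq> {}" and "\<And>H. H \<in> \<H> \<Longrightarrow> submodule H R M"
  shows "submodule (\<Inter>\<H>) R M"
proof (rule submoduleI)
  show "\<Inter>\<H> \<subseteq> carrier M" using assms submoduleE(1) by blast
  show "\<zero>\<^bsub>M\<^esub> \<in> \<Inter>\<H>" using assms(2) submodule_zero_closed by blast
qed (use assms(2) submoduleE(3-5) in blast)+

lemma submodule_smult_preimage:
  assumes W: "submodule W R M" and a: "a \<in> carrier R"
  shows "submodule {x \<in> carrier M. a \<odot>\<^bsub>M\<^esub> x \<in> W} R M"
proof (rule submoduleI)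
  fix x assume "x \<in> {x \<in> carrier M. a \<odot>\<^bsub>M\<^esub> x \<in> W}"
  then show "\<ominus>\<^bsub>M\<^esub> x \<in> {x \<in> carrier M. a \<odot>\<^bsub>M\<^esub> x \<in> W}"
    using a submoduleE(3)[OF W] by (simp add: smult_r_minus)
next
  fix x y assume "x \<in> {x \<in> carrier M. a \<odot>\<^bsub>M\<^esub> x \<in> W}" "y \<in> {x \<in> carrier M. a \<odot>\<^bsub>M\<^esub> x \<in> W}"
  then show "x \<oplus>\<^bsub>M\<^esub> y \<in> {x \<in> carrier M. a \<odot>\<^bsub>M\<^esub> x \<in> W}"
    using a submoduleE(5)[OF W] by (simp add: smult_r_distr)
next
  fix b x assume b: "b \<in> carrier R" and x: "x \<in> {x \<in> carrier M. a \<odot>\<^bsub>M\<^esub> x \<in> W}"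
  then have "a \<odot>\<^bsub>M\<^esub> (b \<odot>\<^bsub>M\<^esub> x) = b \<odot>\<^bsub>M\<^esub> (a \<odot>\<^bsub>M\<^esub> x)"
    using a by (metis (no_types, lifting) mem_Collect_eq m_comm smult_assoc1)
  then show "b \<odot>\<^bsub>M\<^esub> x \<in> {x \<in> carrier M. a \<odot>\<^bsub>M\<^esub> x \<in> W}"
    using b x submoduleE(4)[OF W b] by simp
qed (use a submodule_zero_closed[OF W] in auto)

definition gen_submodule :: "_ set \<Rightarrow> _ set" where
  "gen_submodule S = \<Inter>{H. submodule H R M \<and> S \<subseteq> H}"

lemma gen_submodule_submodule: "S \<subseteq> carrier M \<Longrightarrow> submodule (gen_submodule S) R M"
  unfolding gen_submodule_def by (rule submodule_Inter) (use carrier_is_submodule in auto)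

lemma gen_submodule_incl: "S \<subseteq> gen_submodule S"
  unfolding gen_submodule_def by blast

lemma gen_submodule_least: "submodule H R M \<Longrightarrow> S \<subseteq> H \<Longrightarrow> gen_submodule S \<subseteq> H"
  unfolding gen_submodule_def by blast

lemma gen_submodule_mono: "S \<subseteq> Y \<Longrightarrow> Y \<subseteq> carrier M \<Longrightarrow> gen_submodule S \<subseteq> gen_submodule Y"
  by (meson gen_submodule_incl gen_submodule_least gen_submodule_submodule order_trans)

lemma gen_submodule_subset_carrier: "S \<subseteq> carrier M \<Longrightarrow> gen_submodule S \<subseteq> carrier M"
  using submoduleE(1)[OF gen_submodule_submodule] by blast

lemma finsum_smult_in_submodule:
  assumes W: "submodule W R M" and "finite A" "A \<subseteq> W" "a \<in> A \<rightarrow> carrier R"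
  shows "(\<Oplus>\<^bsub>M\<^esub> s \<in> A. a s \<odot>\<^bsub>M\<^esub> s) \<in> W"
  using assms(2-4)
proof (induction A rule: finite_induct)
  case (insert x A)
  have "x \<in> carrier M" "A \<subseteq> carrier M" using insert submoduleE(1)[OF W] by auto
  then have "(\<Oplus>\<^bsub>M\<^esub> s \<in> insert x A. a s \<odot>\<^bsub>M\<^esub> s) = a x \<odot>\<^bsub>M\<^esub> x \<oplus>\<^bsub>M\<^esub> (\<Oplus>\<^bsub>M\<^esub> s \<in> A. a s \<odot>\<^bsub>M\<^esub> s)"
    using insert by (intro finsum_insert) auto
  then show ?case using insert submoduleE(4,5)[OF W] by auto
qed (simp add: submodule_zero_closed[OF W])

definition add_multiples :: "_ set \<Rightarrow> 'a set \<Rightarrow> _ \<Rightarrow> _ set" where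
  "add_multiples Y I g = {y \<oplus>\<^bsub>M\<^esub> r \<odot>\<^bsub>M\<^esub> g | y r. y \<in> Y \<and> r \<in> I}"

lemma add_multiples_submodule:
  assumes Y: "submodule Y R M" and I: "ideal I R" and g: "g \<in> carrier M"
  shows "submodule (add_multiples Y I g) R M"
proof -
  interpret I: ideal I R by fact
  have Yc: "Y \<subseteq> carrier M" using submoduleE(1)[OF Y] .
  show ?thesis
  proof (rule submoduleI)
    show "add_multiples Y I g \<subseteq> carrier M"
      unfolding add_multiples_def using Yc g I.a_subset by auto
    have "\<zero>\<^bsub>M\<^esub> = \<zero>\<^bsub>M\<^esub> \<oplus>\<^bsub>M\<^esub> \<zero> \<odot>\<^bsub>M\<^esub> g" using g by simp
    then show "\<zero>\<^bsub>M\<^esub> \<in> add_multiples Y I g"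
      unfolding add_multiples_def using submodule_zero_closed[OF Y] I.zero_closed by blast
  next
    fix x assume "x \<in> add_multiples Y I g"
    then obtain y r where yr: "y \<in> Y" "r \<in> I" "x = y \<oplus>\<^bsub>M\<^esub> r \<odot>\<^bsub>M\<^esub> g"
      unfolding add_multiples_def by blast
    then have "\<ominus>\<^bsub>M\<^esub> x = \<ominus>\<^bsub>M\<^esub> y \<oplus>\<^bsub>M\<^esub> (\<ominus> r) \<odot>\<^bsub>M\<^esub> g"
      using Yc g I.a_subset by (auto simp: M.minus_add smult_l_minus)
    then show "\<ominus>\<^bsub>M\<^esub> x \<in> add_multiples Y I g"
      unfolding add_multiples_def using submoduleE(3)[OF Y] yr by blast
  next
    fix x x' assume "x \<in> add_multiples Y I g" "x' \<in> add_multiples Y I g"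
    then obtain y r y' r' where yr: "y \<in> Y" "r \<in> I" "x = y \<oplus>\<^bsub>M\<^esub> r \<odot>\<^bsub>M\<^esub> g"
      and yr': "y' \<in> Y" "r' \<in> I" "x' = y' \<oplus>\<^bsub>M\<^esub> r' \<odot>\<^bsub>M\<^esub> g"
      unfolding add_multiples_def by blast
    moreover have "y \<in> carrier M" "y' \<in> carrier M" "r \<in> carrier R" "r' \<in> carrier R"
      using yr yr' Yc I.a_subset by auto
    ultimately have "x \<oplus>\<^bsub>M\<^esub> x' = (y \<oplus>\<^bsub>M\<^esub> y') \<oplus>\<^bsub>M\<^esub> (r \<oplus> r') \<odot>\<^bsub>M\<^esub> g"
      using g by (simp add: smult_l_distr M.a_ac)
    then show "x \<oplus>\<^bsub>M\<^esub> x' \<in> add_multiples Y I g"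
      unfolding add_multiples_def using submoduleE(5)[OF Y] yr yr' by blast
  next
    fix s x assume s: "s \<in> carrier R" and "x \<in> add_multiples Y I g"
    then obtain y r where yr: "y \<in> Y" "r \<in> I" "x = y \<oplus>\<^bsub>M\<^esub> r \<odot>\<^bsub>M\<^esub> g"
      unfolding add_multiples_def by blast
    then have "s \<odot>\<^bsub>M\<^esub> x = s \<odot>\<^bsub>M\<^esub> y \<oplus>\<^bsub>M\<^esub> (s \<otimes> r) \<odot>\<^bsub>M\<^esub> g"
      using Yc g I.a_subset s by (auto simp: smult_r_distr smult_assoc1)
    then show "s \<odot>\<^bsub>M\<^esub> x \<in> add_multiples Y I g"
      unfolding add_multiples_def using submoduleE(4)[OF Y s] I.I_l_closed[OF _ s] yr by blast
  qed
qed

lemma submodule_subset_add_multiples: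
  assumes "submodule Y R M" "ideal I R" "g \<in> carrier M"
  shows "Y \<subseteq> add_multiples Y I g"
proof
  fix y assume "y \<in> Y"
  moreover have "y \<in> carrier M" using calculation submoduleE(1)[OF assms(1)] by blast
  then have "y = y \<oplus>\<^bsub>M\<^esub> \<zero> \<odot>\<^bsub>M\<^esub> g" using assms(3) by simp
  ultimately show "y \<in> add_multiples Y I g"
    unfolding add_multiples_def using additive_subgroup.zero_closed[OF ideal.axioms(1)[OF assms(2)]]
    by blast
qed

lemma multiples_subset_add_multiples:
  assumes "submodule Y R M" "ideal I R" "g \<in> carrier M"
  shows "{r \<odot>\<^bsub>M\<^esub> g | r. r \<in> I} \<subseteq> add_multiples Y I g"
proof
  fix x assume "x \<in> {r \<odot>\<^bsub>M\<^esub> g | r. r \<in> I}"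
  then obtain r where r: "r \<in> I" "x = r \<odot>\<^bsub>M\<^esub> g" by blast
  moreover have "r \<in> carrier R"
    using r(1) additive_subgroup.a_subset[OF ideal.axioms(1)[OF assms(2)]] by blast
  ultimately have "x = \<zero>\<^bsub>M\<^esub> \<oplus>\<^bsub>M\<^esub> r \<odot>\<^bsub>M\<^esub> g" using assms(3) by simp
  then show "x \<in> add_multiples Y I g"
    unfolding add_multiples_def using submodule_zero_closed[OF assms(1)] r by blast
qed

lemma gen_submodule_Un_multiples:
  assumes I: "ideal I R" and g: "g \<in> carrier M" and S: "S \<subseteq> carrier M"
  shows "gen_submodule (S \<union> {r \<odot>\<^bsub>M\<^esub> g | r. r \<in> I}) = add_multiples (gen_submodule S) I g"
    (is "gen_submodule ?A = ?B")
proof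
  have Y: "submodule (gen_submodule S) R M" using gen_submodule_submodule[OF S] .
  have "S \<subseteq> ?B"
    using gen_submodule_incl submodule_subset_add_multiples[OF Y I g] by blast
  moreover have "{r \<odot>\<^bsub>M\<^esub> g | r. r \<in> I} \<subseteq> ?B"
    by (rule multiples_subset_add_multiples[OF Y I g])
  ultimately show "gen_submodule ?A \<subseteq> ?B"
    using gen_submodule_least[OF add_multiples_submodule[OF Y I g]] by blast
next
  have A: "?A \<subseteq> carrier M"
    using S g additive_subgroup.a_subset[OF ideal.axioms(1)[OF I]] by auto
  show "?B \<subseteq> gen_submodule ?A"
  proof
    fix x assume "x \<in> ?B"
    then obtain y r where yr: "y \<in> gen_submodule S" "r \<in> I" "x = y \<oplus>\<^bsub>M\<^esub> r \<odot>\<^bsub>M\<^esub> g"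
      unfolding add_multiples_def by blast
    have "gen_submodule S \<subseteq> gen_submodule ?A" by (rule gen_submodule_mono[OF _ A]) blast
    then have "y \<in> gen_submodule ?A" using yr(1) by blast
    moreover have "r \<odot>\<^bsub>M\<^esub> g \<in> ?A" using yr(2) by blast
    then have "r \<odot>\<^bsub>M\<^esub> g \<in> gen_submodule ?A" using gen_submodule_incl[of ?A] by blast
    ultimately show "x \<in> gen_submodule ?A"
      using submoduleE(5)[OF gen_submodule_submodule[OF A]] yr(3) by blast
  qed
qed

section \<open>Nakayama's lemma at a prime\<close>

lemma add_multiples_absorb:
  assumes P: "primeideal P R" and Y: "submodule Y R M" and g: "g \<in> carrier M"
    and u: "u \<in> carrier R - P" and ug: "u \<odot>\<^bsub>M\<^esub> g \<in> add_multiples Y P g"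
  shows "\<exists>v \<in> carrier R - P. v \<odot>\<^bsub>M\<^esub> g \<in> Y"
proof -
  interpret P: primeideal P R by fact
  obtain y p where yp: "y \<in> Y" "p \<in> P" "u \<odot>\<^bsub>M\<^esub> g = y \<oplus>\<^bsub>M\<^esub> p \<odot>\<^bsub>M\<^esub> g"
    using ug unfolding add_multiples_def by blast
  have y: "y \<in> carrier M" using yp(1) submoduleE(1)[OF Y] by blast
  have p: "p \<in> carrier R" using yp(2) P.a_subset by blast
  have "u \<ominus> p \<notin> P"
  proof
    assume "u \<ominus> p \<in> P"
    then have "(u \<ominus> p) \<oplus> p \<in> P" using yp(2) by simp
    moreover have "(u \<ominus> p) \<oplus> p = u" using u p by (simp add: R.minus_eq R.a_assoc R.l_neg)
    ultimately show False using u by simp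
  qed
  moreover have "(u \<ominus> p) \<odot>\<^bsub>M\<^esub> g = y"
  proof -
    have "(u \<ominus> p) \<odot>\<^bsub>M\<^esub> g = u \<odot>\<^bsub>M\<^esub> g \<oplus>\<^bsub>M\<^esub> \<ominus>\<^bsub>M\<^esub> (p \<odot>\<^bsub>M\<^esub> g)"
      using u p g by (simp add: a_minus_def smult_l_distr smult_l_minus)
    also have "\<dots> = y" using yp(3) y p g by (simp add: M.a_assoc M.r_neg)
    finally show ?thesis .
  qed
  ultimately show ?thesis using u p yp(1) by (intro bexI[of _ "u \<ominus> p"]) auto
qed

lemma smult_add_multiples_in_submodule:
  assumes W: "submodule W R M" and g: "g \<in> carrier M" and v: "v \<in> carrier R"
    and vg: "v \<odot>\<^bsub>M\<^esub> g \<in> W" and x: "x \<in> add_multiples W (carrier R) g"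
  shows "v \<odot>\<^bsub>M\<^esub> x \<in> W"
proof -
  obtain w r where wr: "w \<in> W" "r \<in> carrier R" "x = w \<oplus>\<^bsub>M\<^esub> r \<odot>\<^bsub>M\<^esub> g"
    using x unfolding add_multiples_def by blast
  have w: "w \<in> carrier M" using wr(1) submoduleE(1)[OF W] by blast
  have "v \<odot>\<^bsub>M\<^esub> x = v \<odot>\<^bsub>M\<^esub> w \<oplus>\<^bsub>M\<^esub> r \<odot>\<^bsub>M\<^esub> (v \<odot>\<^bsub>M\<^esub> g)"
    using wr(2,3) w v g by (simp add: smult_r_distr smult_assoc1[symmetric] m_comm)
  then show ?thesis using submoduleE(4,5)[OF W] wr v vg by simp
qed

lemma smult_add_multiples_ideal:
  assumes W: "submodule W R M" and I: "ideal I R" and g: "g \<in> carrier M" and q: "q \<in> I"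
    and x: "x \<in> add_multiples W (carrier R) g"
  shows "q \<odot>\<^bsub>M\<^esub> x \<in> add_multiples W I g"
proof -
  interpret I: ideal I R by fact
  obtain w r where wr: "w \<in> W" "r \<in> carrier R" "x = w \<oplus>\<^bsub>M\<^esub> r \<odot>\<^bsub>M\<^esub> g"
    using x unfolding add_multiples_def by blast
  have w: "w \<in> carrier M" using wr(1) submoduleE(1)[OF W] by blast
  have q': "q \<in> carrier R" using q I.a_subset by blast
  have "q \<odot>\<^bsub>M\<^esub> x = q \<odot>\<^bsub>M\<^esub> w \<oplus>\<^bsub>M\<^esub> (q \<otimes> r) \<odot>\<^bsub>M\<^esub> g"
    using wr(2,3) w q' g by (simp add: smult_r_distr smult_assoc1)
  moreover have "q \<odot>\<^bsub>M\<^esub> w \<in> W" using submoduleE(4)[OF W q' wr(1)] .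
  moreover have "q \<otimes> r \<in> I" using I.I_r_closed[OF q wr(2)] .
  ultimately show ?thesis unfolding add_multiples_def by blast
qed

definition smult_set :: "'a set \<Rightarrow> _ set \<Rightarrow> _ set" where
  "smult_set I S = {a \<odot>\<^bsub>M\<^esub> s | a s. a \<in> I \<and> s \<in> S}"

lemma smult_set_subset_carrier:
  "ideal I R \<Longrightarrow> S \<subseteq> carrier M \<Longrightarrow> smult_set I S \<subseteq> carrier M"
  unfolding smult_set_def using additive_subgroup.a_subset[OF ideal.axioms(1)] by blast

lemma gen_submodule_smult_set_insert:
  assumes P: "ideal P R" and g: "g \<in> carrier M" and S: "S \<subseteq> carrier M" and W: "W \<subseteq> carrier M"
  shows "gen_submodule (smult_set P (insert g S) \<union> W)
    = add_multiples (gen_submodule (smult_set P S \<union> W)) P g"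
proof -
  have "smult_set P (insert g S) \<union> W = (smult_set P S \<union> W) \<union> {r \<odot>\<^bsub>M\<^esub> g | r. r \<in> P}"
    unfolding smult_set_def by blast
  moreover have "smult_set P S \<union> W \<subseteq> carrier M" using smult_set_subset_carrier[OF P S] W by blast
  ultimately show ?thesis using gen_submodule_Un_multiples[OF P g] by simp
qed

lemma gen_submodule_smult_set_insert_subset:
  assumes P: "ideal P R" and W: "submodule W R M" and g: "g \<in> carrier M" and S: "S \<subseteq> carrier M"
  shows "gen_submodule (smult_set P (insert g S) \<union> W)
    \<subseteq> gen_submodule (smult_set P S \<union> add_multiples W (carrier R) g)"
proof (rule gen_submodule_mono)
  have "{r \<odot>\<^bsub>M\<^esub> g | r. r \<in> P} \<subseteq> add_multiples W (carrier R) g"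
    using multiples_subset_add_multiples[OF W oneideal g] additive_subgroup.a_subset[OF ideal.axioms(1)[OF P]]
    by blast
  then show "smult_set P (insert g S) \<union> W \<subseteq> smult_set P S \<union> add_multiples W (carrier R) g"
    using submodule_subset_add_multiples[OF W oneideal g] unfolding smult_set_def by blast
  show "smult_set P S \<union> add_multiples W (carrier R) g \<subseteq> carrier M"
    using smult_set_subset_carrier[OF P S] submoduleE(1)[OF add_multiples_submodule[OF W oneideal g]]
    by blast
qed

lemma smult_gen_submodule_into_add_multiples:
  assumes P: "ideal P R" and W: "submodule W R M" and g: "g \<in> carrier M" and S: "S \<subseteq> carrier M"
    and u: "u \<in> carrier R" and uS: "\<And>h. h \<in> S \<Longrightarrow> u \<odot>\<^bsub>M\<^esub> h \<in> add_multiples W (carrier R) g"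
    and x: "x \<in> gen_submodule (smult_set P S \<union> W)"
  shows "u \<odot>\<^bsub>M\<^esub> x \<in> add_multiples W P g"
proof -
  interpret P: ideal P R by fact
  have B: "submodule (add_multiples W P g) R M" by (rule add_multiples_submodule[OF W P g])
  have "smult_set P S \<union> W \<subseteq> {z \<in> carrier M. u \<odot>\<^bsub>M\<^esub> z \<in> add_multiples W P g}"
  proof
    fix z assume "z \<in> smult_set P S \<union> W"
    then consider "z \<in> W" | q h where "q \<in> P" "h \<in> S" "z = q \<odot>\<^bsub>M\<^esub> h"
      unfolding smult_set_def by blast
    then show "z \<in> {z \<in> carrier M. u \<odot>\<^bsub>M\<^esub> z \<in> add_multiples W P g}"
    proof cases
      case 1
      then show ?thesis
        using submoduleE(1,4)[OF W] u submodule_subset_add_multiples[OF W P g] by blast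
    next
      case 2
      have q: "q \<in> carrier R" using 2(1) P.a_subset by blast
      have "u \<odot>\<^bsub>M\<^esub> z = q \<odot>\<^bsub>M\<^esub> (u \<odot>\<^bsub>M\<^esub> h)"
        using 2 q u S by (auto simp: smult_assoc1[symmetric] m_comm)
      moreover have "q \<odot>\<^bsub>M\<^esub> (u \<odot>\<^bsub>M\<^esub> h) \<in> add_multiples W P g"
        using smult_add_multiples_ideal[OF W P g 2(1) uS[OF 2(2)]] .
      ultimately show ?thesis using 2 q S by auto
    qed
  qed
  then have "gen_submodule (smult_set P S \<union> W) \<subseteq> {z \<in> carrier M. u \<odot>\<^bsub>M\<^esub> z \<in> add_multiples W P g}"
    by (rule gen_submodule_least[OF submodule_smult_preimage[OF B u]])
  then show ?thesis using x by blast
qed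

text \<open>Nakayama's lemma over the local ring \<open>R\<^sub>P\<close>, without forming it: multiplication by an
  element outside \<open>P\<close> plays the role of a unit.\<close>

lemma nakayama_at_prime:
  assumes P: "primeideal P R" and S: "finite S" "S \<subseteq> carrier M"
    and W: "submodule W R M" and u: "u \<in> carrier R - P"
    and uS: "\<And>g. g \<in> S \<Longrightarrow> u \<odot>\<^bsub>M\<^esub> g \<in> gen_submodule (smult_set P S \<union> W)"
  shows "\<exists>v \<in> carrier R - P. \<forall>g \<in> S. v \<odot>\<^bsub>M\<^esub> g \<in> W"
  using S W u uS
proof (induction S arbitrary: W u rule: finite_induct)
  case empty
  show ?case using primeideal_one_notin[OF P] by auto
next
  case (insert g S)
  interpret P: primeideal P R by fact
  note W = insert.prems(2) and u = insert.prems(3)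
  have g: "g \<in> carrier M" and S: "S \<subseteq> carrier M" using insert.prems(1) by auto
  have Wc: "W \<subseteq> carrier M" using submoduleE(1)[OF W] .
  define V where "V = gen_submodule (smult_set P S \<union> W)"
  have V: "submodule V R M"
    unfolding V_def using gen_submodule_submodule smult_set_subset_carrier[OF P.is_ideal S] Wc
    by simp
  have "u \<odot>\<^bsub>M\<^esub> g \<in> add_multiples V P g"
    using insert.prems(4)[of g] gen_submodule_smult_set_insert[OF P.is_ideal g S Wc]
    unfolding V_def by simp
  then obtain v where v: "v \<in> carrier R - P" "v \<odot>\<^bsub>M\<^esub> g \<in> V"
    using add_multiples_absorb[OF P V g u] by blast
  \<comment> \<open>The induction hypothesis for the larger submodule \<open>W + R g\<close> makes \<open>S\<close> land in \<open>W + R g\<close>; a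
    second absorption then handles \<open>g\<close> itself.\<close>
  obtain u' where u': "u' \<in> carrier R - P" "\<forall>h \<in> S. u' \<odot>\<^bsub>M\<^esub> h \<in> add_multiples W (carrier R) g"
    using insert.IH[OF S add_multiples_submodule[OF W oneideal g] u]
      insert.prems(4) gen_submodule_smult_set_insert_subset[OF P.is_ideal W g S] by blast
  have "(u' \<otimes> v) \<odot>\<^bsub>M\<^esub> g = u' \<odot>\<^bsub>M\<^esub> (v \<odot>\<^bsub>M\<^esub> g)" using u' v g by (simp add: smult_assoc1)
  then have "(u' \<otimes> v) \<odot>\<^bsub>M\<^esub> g \<in> add_multiples W P g"
    using smult_gen_submodule_into_add_multiples[OF P.is_ideal W g S _ _ v(2)[unfolded V_def]] u' by simp
  then obtain e where e: "e \<in> carrier R - P" "e \<odot>\<^bsub>M\<^esub> g \<in> W"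
    using add_multiples_absorb[OF P W g primeideal_mult_notin[OF P u'(1) v(1)]] by blast
  show ?case
  proof (intro bexI ballI)
    show "u' \<otimes> e \<in> carrier R - P" using primeideal_mult_notin[OF P u'(1) e(1)] .
    fix h assume "h \<in> insert g S"
    then consider "h = g" | "h \<in> S" by blast
    then show "(u' \<otimes> e) \<odot>\<^bsub>M\<^esub> h \<in> W"
    proof cases
      case 1
      then show ?thesis using e u' g submoduleE(4)[OF W] by (simp add: smult_assoc1)
    next
      case 2
      have "(u' \<otimes> e) \<odot>\<^bsub>M\<^esub> h = e \<odot>\<^bsub>M\<^esub> (u' \<odot>\<^bsub>M\<^esub> h)"
        using 2 e u' S by (auto simp: smult_assoc1[symmetric] m_comm)
      then show ?thesis
        using smult_add_multiples_in_submodule[OF W g _ e(2)] e(1) u'(2) 2 by simp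
    qed
  qed
qed

section \<open>Support of a finitely generated module\<close>

lemma common_multiplier_outside_prime:
  assumes P: "primeideal P R" and W: "submodule W R M" and S: "finite S" "S \<subseteq> carrier M"
    and t: "\<And>s. s \<in> S \<Longrightarrow> \<exists>t \<in> carrier R - P. t \<odot>\<^bsub>M\<^esub> s \<in> W"
  shows "\<exists>u \<in> carrier R - P. \<forall>s \<in> S. u \<odot>\<^bsub>M\<^esub> s \<in> W"
  using S t
proof (induction S rule: finite_induct)
  case empty
  show ?case using primeideal_one_notin[OF P] by auto
next
  case (insert s S)
  obtain u where u: "u \<in> carrier R - P" "\<forall>x \<in> S. u \<odot>\<^bsub>M\<^esub> x \<in> W" using insert by auto
  obtain t where t: "t \<in> carrier R - P" "t \<odot>\<^bsub>M\<^esub> s \<in> W" using insert.prems by auto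
  have "(t \<otimes> u) \<odot>\<^bsub>M\<^esub> x \<in> W" if x: "x \<in> insert s S" for x
    using x
  proof
    assume "x = s"
    then have "(t \<otimes> u) \<odot>\<^bsub>M\<^esub> x = u \<odot>\<^bsub>M\<^esub> (t \<odot>\<^bsub>M\<^esub> s)"
      using insert.prems(1) t(1) u(1) by (metis DiffD1 insertI1 m_comm smult_assoc1 subsetD)
    then show ?thesis using t u submoduleE(4)[OF W] by auto
  next
    assume "x \<in> S"
    then have "(t \<otimes> u) \<odot>\<^bsub>M\<^esub> x = t \<odot>\<^bsub>M\<^esub> (u \<odot>\<^bsub>M\<^esub> x)"
      using insert.prems(1) t(1) u(1) by (auto simp: smult_assoc1)
    then show ?thesis using \<open>x \<in> S\<close> t u submoduleE(4)[OF W] by auto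
  qed
  then show ?case using primeideal_mult_notin[OF P t(1) u(1)] by blast
qed

lemma fin_gen_module_generators:
  assumes "fin_gen_module R M"
  obtains S where "finite S" "S \<subseteq> carrier M" "carrier M = gen_submodule S"
proof -
  obtain S where S: "finite S" "S \<subseteq> carrier M"
    and comb: "\<forall>x \<in> carrier M. \<exists>a. a \<in> S \<rightarrow> carrier R \<and> x = (\<Oplus>\<^bsub>M\<^esub> s \<in> S. a s \<odot>\<^bsub>M\<^esub> s)"
    using assms unfolding fin_gen_module_def by blast
  have "carrier M \<subseteq> gen_submodule S"
  proof
    fix x assume "x \<in> carrier M"
    then obtain a where "a \<in> S \<rightarrow> carrier R" "x = (\<Oplus>\<^bsub>M\<^esub> s \<in> S. a s \<odot>\<^bsub>M\<^esub> s)"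
      using comb by blast
    then show "x \<in> gen_submodule S"
      using finsum_smult_in_submodule[OF gen_submodule_submodule[OF S(2)] S(1) gen_submodule_incl]
      by simp
  qed
  then show ?thesis using that S gen_submodule_subset_carrier[OF S(2)] by blast
qed

lemma smult_into_submodule_from_generators:
  assumes gen: "carrier M = gen_submodule S" and W: "submodule W R M" and a: "a \<in> carrier R"
    and aS: "\<And>s. s \<in> S \<Longrightarrow> a \<odot>\<^bsub>M\<^esub> s \<in> W" and x: "x \<in> carrier M"
  shows "a \<odot>\<^bsub>M\<^esub> x \<in> W"
proof -
  have "S \<subseteq> {x \<in> carrier M. a \<odot>\<^bsub>M\<^esub> x \<in> W}"
    using aS gen gen_submodule_incl[of S] by blast
  then have "gen_submodule S \<subseteq> {x \<in> carrier M. a \<odot>\<^bsub>M\<^esub> x \<in> W}"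
    by (rule gen_submodule_least[OF submodule_smult_preimage[OF W a]])
  then show ?thesis using gen x by blast
qed

lemma annihilator_outside_prime_if_not_in_Supp:
  assumes P: "primeideal P R" and fg: "fin_gen_module R M" and P_Supp: "P \<notin> Supp R M"
  shows "\<exists>u \<in> carrier R - P. \<forall>x \<in> carrier M. u \<odot>\<^bsub>M\<^esub> x = \<zero>\<^bsub>M\<^esub>"
proof -
  obtain S where S: "finite S" "S \<subseteq> carrier M" "carrier M = gen_submodule S"
    using fin_gen_module_generators[OF fg] .
  have "\<exists>t \<in> carrier R - P. t \<odot>\<^bsub>M\<^esub> s \<in> {\<zero>\<^bsub>M\<^esub>}" if "s \<in> S" for s
    using P P_Supp S(2) that unfolding Supp_def by blast
  then obtain u where u: "u \<in> carrier R - P" "\<forall>s \<in> S. u \<odot>\<^bsub>M\<^esub> s \<in> {\<zero>\<^bsub>M\<^esub>}"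
    using common_multiplier_outside_prime[OF P zero_submodule S(1,2)] by blast
  then show ?thesis
    using smult_into_submodule_from_generators[OF S(3) zero_submodule] by blast
qed

text \<open>In localized form: \<open>M\<^sub>P \<noteq> P M\<^sub>P\<close>.\<close>

lemma Supp_not_spanned_by_prime_multiples:
  assumes P: "primeideal P R" and P_Supp: "P \<in> Supp R M"
    and S: "finite S" "carrier M = gen_submodule S"
  shows "\<not> (\<exists>u \<in> carrier R - P. \<forall>x \<in> carrier M. u \<odot>\<^bsub>M\<^esub> x \<in> gen_submodule (smult_set P S))"
proof
  assume "\<exists>u \<in> carrier R - P. \<forall>x \<in> carrier M. u \<odot>\<^bsub>M\<^esub> x \<in> gen_submodule (smult_set P S)"
  then obtain u where u: "u \<in> carrier R - P"
    and uM: "\<And>x. x \<in> carrier M \<Longrightarrow> u \<odot>\<^bsub>M\<^esub> x \<in> gen_submodule (smult_set P S)"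
    by blast
  have Sc: "S \<subseteq> carrier M" using S(2) gen_submodule_incl by blast
  have PS: "smult_set P S \<union> {\<zero>\<^bsub>M\<^esub>} \<subseteq> carrier M"
    using smult_set_subset_carrier[OF primeideal.axioms(1)[OF P] Sc] by blast
  have "u \<odot>\<^bsub>M\<^esub> g \<in> gen_submodule (smult_set P S \<union> {\<zero>\<^bsub>M\<^esub>})" if "g \<in> S" for g
    using uM[of g] that Sc gen_submodule_mono[OF _ PS, of "smult_set P S"] by blast
  then obtain v where v: "v \<in> carrier R - P" "\<forall>g \<in> S. v \<odot>\<^bsub>M\<^esub> g \<in> {\<zero>\<^bsub>M\<^esub>}"
    using nakayama_at_prime[OF P S(1) Sc zero_submodule u] by blast
  obtain x where x: "x \<in> carrier M" "\<forall>t \<in> carrier R - P. t \<odot>\<^bsub>M\<^esub> x \<noteq> \<zero>\<^bsub>M\<^esub>"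
    using P_Supp unfolding Supp_def by blast
  have "v \<odot>\<^bsub>M\<^esub> x \<in> {\<zero>\<^bsub>M\<^esub>}"
    using smult_into_submodule_from_generators[OF S(2) zero_submodule] v x(1) by blast
  then show False using x(2) v(1) by blast
qed

end

text \<open>An \<open>R\<close>-linear map \<open>M \<rightarrow> R/P\<close>, represented by a choice of lifts to \<open>R\<close>.\<close>

definition linear_mod :: "('a, 'r) ring_scheme \<Rightarrow> ('a, 'm, 'x) module_scheme \<Rightarrow> 'a set \<Rightarrow> ('m \<Rightarrow> 'a) \<Rightarrow> bool" where
  "linear_mod R M P \<phi> \<longleftrightarrow> \<phi> \<in> carrier M \<rightarrow> carrier R \<and>
     (\<forall>x \<in> carrier M. \<forall>y \<in> carrier M. \<phi> (x \<oplus>\<^bsub>M\<^esub> y) \<ominus>\<^bsub>R\<^esub> (\<phi> x \<oplus>\<^bsub>R\<^esub> \<phi> y) \<in> P) \<and>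
     (\<forall>r \<in> carrier R. \<forall>x \<in> carrier M. \<phi> (r \<odot>\<^bsub>M\<^esub> x) \<ominus>\<^bsub>R\<^esub> r \<otimes>\<^bsub>R\<^esub> \<phi> x \<in> P)"

lemma linear_mod_closed: "linear_mod R M P \<phi> \<Longrightarrow> x \<in> carrier M \<Longrightarrow> \<phi> x \<in> carrier R"
  unfolding linear_mod_def by blast

lemma linear_mod_add:
  "linear_mod R M P \<phi> \<Longrightarrow> x \<in> carrier M \<Longrightarrow> y \<in> carrier M
    \<Longrightarrow> \<phi> (x \<oplus>\<^bsub>M\<^esub> y) \<ominus>\<^bsub>R\<^esub> (\<phi> x \<oplus>\<^bsub>R\<^esub> \<phi> y) \<in> P"
  unfolding linear_mod_def by blast

lemma linear_mod_smult:
  "linear_mod R M P \<phi> \<Longrightarrow> r \<in> carrier R \<Longrightarrow> x \<in> carrier M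
    \<Longrightarrow> \<phi> (r \<odot>\<^bsub>M\<^esub> x) \<ominus>\<^bsub>R\<^esub> r \<otimes>\<^bsub>R\<^esub> \<phi> x \<in> P"
  unfolding linear_mod_def by blast

context module
begin

lemma gen_submodule_insert_subset:
  assumes "S \<subseteq> carrier M" "g \<in> carrier M"
  shows "gen_submodule (insert g S) \<subseteq> add_multiples (gen_submodule S) (carrier R) g"
proof -
  have "g \<in> {r \<odot>\<^bsub>M\<^esub> g | r. r \<in> carrier R}" by (intro CollectI exI[of _ \<one>]) (simp add: assms)
  then have "insert g S \<subseteq> S \<union> {r \<odot>\<^bsub>M\<^esub> g | r. r \<in> carrier R}" by blast
  moreover have "S \<union> {r \<odot>\<^bsub>M\<^esub> g | r. r \<in> carrier R} \<subseteq> carrier M" using assms by blast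
  ultimately show ?thesis
    using gen_submodule_mono gen_submodule_Un_multiples[OF oneideal assms(2,1)] by blast
qed

text \<open>\<open>M\<^sub>P / W\<^sub>P\<close> is cyclic, generated by \<open>g\<close>, with annihilator inside \<open>P\<close>. \<open>W\<close> is spanned by \<open>P S\<close>
  and a maximal subset \<open>T\<close> of the generators \<open>S\<close> that does not span \<open>M\<^sub>P\<close> together with \<open>P S\<close>;
  a generator \<open>g\<close> outside \<open>T\<close> then spans modulo \<open>W\<close>.\<close>

lemma Supp_cyclic_quotient:
  assumes P: "primeideal P R" and fg: "fin_gen_module R M" and P_Supp: "P \<in> Supp R M"
  obtains W g d where "submodule W R M" "g \<in> carrier M" "d \<in> carrier R - P"
    "{r \<in> carrier R. r \<odot>\<^bsub>M\<^esub> g \<in> W} \<subseteq> P"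
    "\<And>x. x \<in> carrier M \<Longrightarrow> d \<odot>\<^bsub>M\<^esub> x \<in> add_multiples W (carrier R) g"
proof -
  interpret P: primeideal P R by fact
  obtain S where S: "finite S" "S \<subseteq> carrier M" "carrier M = gen_submodule S"
    using fin_gen_module_generators[OF fg] .
  have PS: "smult_set P S \<subseteq> carrier M" using smult_set_subset_carrier[OF P.is_ideal S(2)] .
  define spans where
    "spans T \<longleftrightarrow> (\<exists>u \<in> carrier R - P. \<forall>x \<in> carrier M. u \<odot>\<^bsub>M\<^esub> x \<in> gen_submodule (smult_set P S \<union> T))"
    for T
  have "\<not> spans {}"
    unfolding spans_def using Supp_not_spanned_by_prime_multiples[OF P P_Supp S(1,3)] by simp
  moreover have "spans S"
  proof -
    have "gen_submodule S \<subseteq> gen_submodule (smult_set P S \<union> S)"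
      using gen_submodule_mono PS S(2) by simp
    then have "\<forall>x \<in> carrier M. \<one> \<odot>\<^bsub>M\<^esub> x \<in> gen_submodule (smult_set P S \<union> S)"
      using S(3) by auto
    moreover have "\<one> \<in> carrier R - P" using primeideal_one_notin[OF P] by simp
    ultimately show ?thesis unfolding spans_def by blast
  qed
  ultimately obtain T g where T: "T \<subseteq> S" "\<not> spans T" and g: "g \<in> S" and "spans (insert g T)"
    using finite_subset_threshold[OF S(1)] by blast
  then obtain d where d: "d \<in> carrier R - P"
    and dx: "\<And>x. x \<in> carrier M \<Longrightarrow> d \<odot>\<^bsub>M\<^esub> x \<in> gen_submodule (smult_set P S \<union> T \<union> {g})"
    unfolding spans_def by auto
  define W where "W = gen_submodule (smult_set P S \<union> T)"
  have PST: "smult_set P S \<union> T \<subseteq> carrier M" using PS T(1) S(2) by blast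
  have W: "submodule W R M" unfolding W_def by (rule gen_submodule_submodule[OF PST])
  have gc: "g \<in> carrier M" using g S(2) by blast
  have dW: "d \<odot>\<^bsub>M\<^esub> x \<in> add_multiples W (carrier R) g" if "x \<in> carrier M" for x
    using dx[OF that] gen_submodule_insert_subset[OF PST gc] unfolding W_def by auto
  have "{r \<in> carrier R. r \<odot>\<^bsub>M\<^esub> g \<in> W} \<subseteq> P"
  proof (rule subsetI, rule ccontr)
    fix r assume "r \<in> {r \<in> carrier R. r \<odot>\<^bsub>M\<^esub> g \<in> W}" and "r \<notin> P"
    then have r: "r \<in> carrier R" and rg: "r \<odot>\<^bsub>M\<^esub> g \<in> W" by auto
    have "(r \<otimes> d) \<odot>\<^bsub>M\<^esub> x \<in> W" if "x \<in> carrier M" for x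
      using smult_add_multiples_in_submodule[OF W gc r rg dW[OF that]] that r d by (simp add: smult_assoc1)
    then have "spans T"
      unfolding spans_def W_def using primeideal_mult_notin[OF P _ d] r \<open>r \<notin> P\<close> by blast
    then show False using T(2) by blast
  qed
  then show ?thesis using that W gc d dW by blast
qed

lemma add_multiples_coeff_unique:
  assumes W: "submodule W R M" and g: "g \<in> carrier M"
    and sat: "{r \<in> carrier R. r \<odot>\<^bsub>M\<^esub> g \<in> W} \<subseteq> P"
    and w: "w \<in> W" "w' \<in> W" and r: "r \<in> carrier R" "r' \<in> carrier R"
    and eq: "w \<oplus>\<^bsub>M\<^esub> r \<odot>\<^bsub>M\<^esub> g = w' \<oplus>\<^bsub>M\<^esub> r' \<odot>\<^bsub>M\<^esub> g"
  shows "r \<ominus> r' \<in> P"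
proof -
  have "(r \<ominus> r') \<odot>\<^bsub>M\<^esub> g = w' \<ominus>\<^bsub>M\<^esub> w"
    using smult_diff_from_eq[OF _ _ r g eq] w submoduleE(1)[OF W] by blast
  also have "\<dots> \<in> W"
    using W w by (simp add: a_minus_def submoduleE(3,5))
  finally show ?thesis using sat r by blast
qed

lemma linear_mod_coefficient:
  assumes P: "primeideal P R" and W: "submodule W R M" and g: "g \<in> carrier M" and d: "d \<in> carrier R - P"
    and sat: "{r \<in> carrier R. r \<odot>\<^bsub>M\<^esub> g \<in> W} \<subseteq> P"
    and \<phi>: "\<And>x. x \<in> carrier M \<Longrightarrow> \<phi> x \<in> carrier R \<and> (\<exists>w \<in> W. d \<odot>\<^bsub>M\<^esub> x = w \<oplus>\<^bsub>M\<^esub> \<phi> x \<odot>\<^bsub>M\<^esub> g)"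
  shows "linear_mod R M P \<phi>"
proof -
  have Wc: "W \<subseteq> carrier M" using submoduleE(1)[OF W] .
  note unique = add_multiples_coeff_unique[OF W g sat]
  have add: "\<phi> (x \<oplus>\<^bsub>M\<^esub> y) \<ominus> (\<phi> x \<oplus> \<phi> y) \<in> P" if x: "x \<in> carrier M" and y: "y \<in> carrier M" for x y
  proof -
    obtain w w' w'' where w: "w \<in> W" "d \<odot>\<^bsub>M\<^esub> x = w \<oplus>\<^bsub>M\<^esub> \<phi> x \<odot>\<^bsub>M\<^esub> g"
      and w': "w' \<in> W" "d \<odot>\<^bsub>M\<^esub> y = w' \<oplus>\<^bsub>M\<^esub> \<phi> y \<odot>\<^bsub>M\<^esub> g"
      and w'': "w'' \<in> W" "d \<odot>\<^bsub>M\<^esub> (x \<oplus>\<^bsub>M\<^esub> y) = w'' \<oplus>\<^bsub>M\<^esub> \<phi> (x \<oplus>\<^bsub>M\<^esub> y) \<odot>\<^bsub>M\<^esub> g"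
      using \<phi>[OF x] \<phi>[OF y] \<phi>[OF add.m_closed[OF x y]] by blast
    have c: "w \<in> carrier M" "w' \<in> carrier M" "\<phi> x \<in> carrier R" "\<phi> y \<in> carrier R"
      using w(1) w'(1) Wc \<phi>[OF x] \<phi>[OF y] by auto
    have "d \<odot>\<^bsub>M\<^esub> (x \<oplus>\<^bsub>M\<^esub> y) = (w \<oplus>\<^bsub>M\<^esub> w') \<oplus>\<^bsub>M\<^esub> (\<phi> x \<oplus> \<phi> y) \<odot>\<^bsub>M\<^esub> g"
      using w(2) w'(2) x y d g c by (simp add: smult_r_distr smult_l_distr M.a_ac)
    then show ?thesis
      using unique[OF w''(1) _ _ _ , of "w \<oplus>\<^bsub>M\<^esub> w'"] w''(2) \<phi>[OF add.m_closed[OF x y]] c w(1) w'(1)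
        submoduleE(5)[OF W] by simp
  qed
  have smult: "\<phi> (s \<odot>\<^bsub>M\<^esub> x) \<ominus> s \<otimes> \<phi> x \<in> P" if s: "s \<in> carrier R" and x: "x \<in> carrier M" for s x
  proof -
    obtain w w' where w: "w \<in> W" "d \<odot>\<^bsub>M\<^esub> x = w \<oplus>\<^bsub>M\<^esub> \<phi> x \<odot>\<^bsub>M\<^esub> g"
      and w': "w' \<in> W" "d \<odot>\<^bsub>M\<^esub> (s \<odot>\<^bsub>M\<^esub> x) = w' \<oplus>\<^bsub>M\<^esub> \<phi> (s \<odot>\<^bsub>M\<^esub> x) \<odot>\<^bsub>M\<^esub> g"
      using \<phi>[OF x] \<phi>[OF smult_closed[OF s x]] by blast
    have c: "w \<in> carrier M" "\<phi> x \<in> carrier R" using w(1) Wc \<phi>[OF x] by auto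
    have "d \<odot>\<^bsub>M\<^esub> (s \<odot>\<^bsub>M\<^esub> x) = s \<odot>\<^bsub>M\<^esub> (d \<odot>\<^bsub>M\<^esub> x)"
      using s x d by (metis DiffD1 m_comm smult_assoc1)
    also have "\<dots> = s \<odot>\<^bsub>M\<^esub> w \<oplus>\<^bsub>M\<^esub> (s \<otimes> \<phi> x) \<odot>\<^bsub>M\<^esub> g"
      using w(2) s g c by (simp add: smult_r_distr smult_assoc1)
    finally show ?thesis
      using unique[OF w'(1) _ _ _, of "s \<odot>\<^bsub>M\<^esub> w"] w'(2) \<phi>[OF smult_closed[OF s x]] s c w(1)
        submoduleE(4)[OF W] by simp
  qed
  show ?thesis
    unfolding linear_mod_def using \<phi> add smult by (simp add: Pi_def)
qed

lemma linear_mod_coefficient_nonvanishing: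
  assumes P: "primeideal P R" and W: "submodule W R M" and g: "g \<in> carrier M" and d: "d \<in> carrier R - P"
    and sat: "{r \<in> carrier R. r \<odot>\<^bsub>M\<^esub> g \<in> W} \<subseteq> P"
    and \<phi>: "\<And>x. x \<in> carrier M \<Longrightarrow> \<phi> x \<in> carrier R \<and> (\<exists>w \<in> W. d \<odot>\<^bsub>M\<^esub> x = w \<oplus>\<^bsub>M\<^esub> \<phi> x \<odot>\<^bsub>M\<^esub> g)"
  shows "\<phi> g \<notin> P"
proof
  interpret P: primeideal P R by fact
  note unique = add_multiples_coeff_unique[OF W g sat]
  assume "\<phi> g \<in> P"
  obtain w where w: "w \<in> W" "d \<odot>\<^bsub>M\<^esub> g = w \<oplus>\<^bsub>M\<^esub> \<phi> g \<odot>\<^bsub>M\<^esub> g" using \<phi>[OF g] by blast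
  have "\<zero>\<^bsub>M\<^esub> \<oplus>\<^bsub>M\<^esub> d \<odot>\<^bsub>M\<^esub> g = d \<odot>\<^bsub>M\<^esub> g" using d g by simp
  then have "\<zero>\<^bsub>M\<^esub> \<oplus>\<^bsub>M\<^esub> d \<odot>\<^bsub>M\<^esub> g = w \<oplus>\<^bsub>M\<^esub> \<phi> g \<odot>\<^bsub>M\<^esub> g" using w(2) by simp
  then have "d \<ominus> \<phi> g \<in> P" using unique[OF submodule_zero_closed[OF W] w(1)] d \<phi>[OF g] by blast
  then have "(d \<ominus> \<phi> g) \<oplus> \<phi> g \<in> P" using \<open>\<phi> g \<in> P\<close> by simp
  moreover have "(d \<ominus> \<phi> g) \<oplus> \<phi> g = d"
    using \<phi>[OF g] d by (simp add: R.minus_eq R.a_assoc R.l_neg)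
  ultimately show False using d by simp
qed

lemma linear_mod_nonvanishing_exists:
  assumes P: "primeideal P R" and fg: "fin_gen_module R M" and P_Supp: "P \<in> Supp R M"
  obtains \<phi> g where "g \<in> carrier M" "linear_mod R M P \<phi>" "\<phi> g \<notin> P"
proof -
  obtain W g d where W: "submodule W R M" and g: "g \<in> carrier M" and d: "d \<in> carrier R - P"
    and sat: "{r \<in> carrier R. r \<odot>\<^bsub>M\<^esub> g \<in> W} \<subseteq> P"
    and dx: "\<And>x. x \<in> carrier M \<Longrightarrow> d \<odot>\<^bsub>M\<^esub> x \<in> add_multiples W (carrier R) g"
    using Supp_cyclic_quotient[OF P fg P_Supp] by blast
  \<comment> \<open>\<open>\<phi> x\<close> is the coefficient of \<open>g\<close> in \<open>d x\<close>, well defined modulo \<open>P\<close>.\<close>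
  define \<phi> where "\<phi> x = (SOME r. r \<in> carrier R \<and> (\<exists>w \<in> W. d \<odot>\<^bsub>M\<^esub> x = w \<oplus>\<^bsub>M\<^esub> r \<odot>\<^bsub>M\<^esub> g))" for x
  have "\<phi> x \<in> carrier R \<and> (\<exists>w \<in> W. d \<odot>\<^bsub>M\<^esub> x = w \<oplus>\<^bsub>M\<^esub> \<phi> x \<odot>\<^bsub>M\<^esub> g)" if "x \<in> carrier M" for x
    unfolding \<phi>_def by (rule someI_ex) (use dx[OF that] in \<open>auto simp: add_multiples_def\<close>)
  then show ?thesis
    using that g linear_mod_coefficient[OF P W g d sat] linear_mod_coefficient_nonvanishing[OF P W g d sat]
    by blast
qed

end

section \<open>Free modules\<close>

lemma free_mod_carrier:
  "carrier (free_mod R A) =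
     {f. (\<forall>x. f x \<in> carrier R) \<and> finite {x. f x \<noteq> \<zero>\<^bsub>R\<^esub>} \<and> {x. f x \<noteq> \<zero>\<^bsub>R\<^esub>} \<subseteq> A}"
  by (simp add: free_mod_def)

lemma free_mod_ops:
  "\<zero>\<^bsub>free_mod R A\<^esub> = (\<lambda>x. \<zero>\<^bsub>R\<^esub>)"
  "f \<oplus>\<^bsub>free_mod R A\<^esub> g = (\<lambda>x. f x \<oplus>\<^bsub>R\<^esub> g x)"
  "r \<odot>\<^bsub>free_mod R A\<^esub> f = (\<lambda>x. r \<otimes>\<^bsub>R\<^esub> f x)"
  by (simp_all add: free_mod_def)

lemma free_mod_memD:
  assumes "f \<in> carrier (free_mod R A)"
  shows "f x \<in> carrier R" and "finite {x. f x \<noteq> \<zero>\<^bsub>R\<^esub>}" and "{x. f x \<noteq> \<zero>\<^bsub>R\<^esub>} \<subseteq> A"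
  using assms by (simp_all add: free_mod_carrier)

lemma free_mod_memI:
  assumes "\<And>x. f x \<in> carrier R" and "{x. f x \<noteq> \<zero>\<^bsub>R\<^esub>} \<subseteq> B" and "finite B" and "B \<subseteq> A"
  shows "f \<in> carrier (free_mod R A)"
  using assms finite_subset[OF assms(2,3)] by (auto simp: free_mod_carrier)

lemma free_mod_module:
  assumes "cring R"
  shows "module R (free_mod R A)"
proof -
  interpret R: cring R by fact
  note memD = free_mod_memD[where R = R and A = A]
  show ?thesis
  proof (intro moduleI abelian_groupI, unfold free_mod_ops)
    fix f g assume f: "f \<in> carrier (free_mod R A)" and g: "g \<in> carrier (free_mod R A)"
    show "(\<lambda>x. f x \<oplus>\<^bsub>R\<^esub> g x) \<in> carrier (free_mod R A)"
      by (rule free_mod_memI[of _ _ "{x. f x \<noteq> \<zero>\<^bsub>R\<^esub>} \<union> {x. g x \<noteq> \<zero>\<^bsub>R\<^esub>}"])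
        (use memD[OF f] memD[OF g] in auto)
    show "(\<lambda>x. f x \<oplus>\<^bsub>R\<^esub> g x) = (\<lambda>x. g x \<oplus>\<^bsub>R\<^esub> f x)"
      using memD(1)[OF f] memD(1)[OF g] by (auto simp: R.a_comm)
  next
    fix f assume f: "f \<in> carrier (free_mod R A)"
    show "\<exists>g \<in> carrier (free_mod R A). (\<lambda>x. g x \<oplus>\<^bsub>R\<^esub> f x) = (\<lambda>x. \<zero>\<^bsub>R\<^esub>)"
    proof (rule bexI[of _ "\<lambda>x. \<ominus>\<^bsub>R\<^esub> f x"])
      show "(\<lambda>x. \<ominus>\<^bsub>R\<^esub> f x) \<in> carrier (free_mod R A)"
        by (rule free_mod_memI[OF _ _ memD(2,3)[OF f]]) (use memD(1)[OF f] in auto)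
    qed (use memD(1)[OF f] in \<open>auto simp: R.l_neg\<close>)
    fix r assume "r \<in> carrier R"
    then show "(\<lambda>x. r \<otimes>\<^bsub>R\<^esub> f x) \<in> carrier (free_mod R A)"
      by (intro free_mod_memI[OF _ _ memD(2,3)[OF f]]) (use memD(1)[OF f] in auto)
  qed (auto simp: free_mod_carrier R.a_assoc R.l_distr R.r_distr R.m_assoc R.is_cring dest: memD(1))
qed

lemma free_mod_induct [consumes 2, case_names zero add smult delta]:
  fixes R :: "('a, 'r) ring_scheme" (structure)
  assumes "cring R" and f: "f \<in> carrier (free_mod R A)"
    and zero: "Q (\<lambda>z. \<zero>\<^bsub>R\<^esub>)"
    and add: "\<And>f g. f \<in> carrier (free_mod R A) \<Longrightarrow> g \<in> carrier (free_mod R A) \<Longrightarrow> Q f \<Longrightarrow> Q g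
      \<Longrightarrow> Q (\<lambda>z. f z \<oplus>\<^bsub>R\<^esub> g z)"
    and smult: "\<And>r f. r \<in> carrier R \<Longrightarrow> f \<in> carrier (free_mod R A) \<Longrightarrow> Q f \<Longrightarrow> Q (\<lambda>z. r \<otimes>\<^bsub>R\<^esub> f z)"
    and delta: "\<And>c. c \<in> A \<Longrightarrow> Q (delta R c)"
  shows "Q f"
  using f
proof (induction "card {z. f z \<noteq> \<zero>\<^bsub>R\<^esub>}" arbitrary: f rule: less_induct)
  case less
  interpret R: cring R by fact
  interpret F: module R "free_mod R A" by (rule free_mod_module) fact
  note memD = free_mod_memD[OF less.prems]
  show ?case
  proof (cases "\<exists>c. f c \<noteq> \<zero>")
    case False
    then have "f = (\<lambda>z. \<zero>)" by auto
    then show ?thesis using zero by simp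
  next
    case True
    then obtain c where c: "f c \<noteq> \<zero>" by blast
    have cA: "c \<in> A" using c memD(3) by blast
    have d: "delta R c \<in> carrier (free_mod R A)"
      by (rule free_mod_memI[of _ _ "{c}"]) (use cA in \<open>auto simp: delta_def\<close>)
    have fc: "f c \<in> carrier R" by (rule memD(1))
    \<comment> \<open>Split off the term at \<open>c\<close>; the rest has smaller support.\<close>
    define g where "g = (\<lambda>z. f z \<oplus> (\<ominus> f c) \<otimes> delta R c z)"
    have g: "g \<in> carrier (free_mod R A)"
      using F.add.m_closed[OF less.prems F.smult_closed[OF _ d, of "\<ominus> f c"]] fc
      unfolding g_def by (simp add: free_mod_ops)
    have "{z. g z \<noteq> \<zero>} \<subset> {z. f z \<noteq> \<zero>}"
      using c fc memD(1) unfolding g_def by (auto simp: delta_def R.r_neg split: if_splits)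
    then have "card {z. g z \<noteq> \<zero>} < card {z. f z \<noteq> \<zero>}"
      by (rule psubset_card_mono[OF memD(2)])
    then have "Q g" using less.hyps g by blast
    moreover have "Q (\<lambda>z. f c \<otimes> delta R c z)" by (rule smult[OF fc d delta[OF cA]])
    ultimately have "Q (\<lambda>z. g z \<oplus> f c \<otimes> delta R c z)"
      using add[OF g] F.smult_closed[OF fc d] by (simp add: free_mod_ops)
    moreover have "(\<lambda>z. g z \<oplus> f c \<otimes> delta R c z) = f"
      using fc memD(1) by (auto simp: g_def delta_def R.l_neg R.a_assoc)
    ultimately show ?thesis by simp
  qed
qed

definition free_lift ::
    "('a, 'r) ring_scheme \<Rightarrow> ('a, 'e, 'z) module_scheme \<Rightarrow> ('c \<Rightarrow> 'e) \<Rightarrow> ('c \<Rightarrow> 'a) \<Rightarrow> 'e" where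
  "free_lift R L \<beta> f = (\<Oplus>\<^bsub>L\<^esub> z \<in> {z. f z \<noteq> \<zero>\<^bsub>R\<^esub>}. f z \<odot>\<^bsub>L\<^esub> \<beta> z)"

context module
begin

lemma free_lift_eq_finsum:
  assumes \<beta>: "\<beta> \<in> A \<rightarrow> carrier M" and f: "f \<in> carrier (free_mod R A)"
    and Z: "finite Z" "{z. f z \<noteq> \<zero>} \<subseteq> Z" "Z \<subseteq> A"
  shows "free_lift R M \<beta> f = (\<Oplus>\<^bsub>M\<^esub> z \<in> Z. f z \<odot>\<^bsub>M\<^esub> \<beta> z)"
  unfolding free_lift_def
proof (rule M.add.finprod_mono_neutral_cong_left[OF Z(1,2)])
  show "(\<lambda>z. f z \<odot>\<^bsub>M\<^esub> \<beta> z) \<in> Z \<rightarrow> carrier M"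
    using Z(3) \<beta> free_mod_memD(1)[OF f] by auto
qed (use Z(3) \<beta> in \<open>auto simp: Pi_iff subset_iff\<close>)

lemma free_lift_closed:
  "\<beta> \<in> A \<rightarrow> carrier M \<Longrightarrow> f \<in> carrier (free_mod R A) \<Longrightarrow> free_lift R M \<beta> f \<in> carrier M"
  unfolding free_lift_def using free_mod_memD[of f R A] by (intro finsum_closed) auto

lemma free_lift_add:
  assumes \<beta>: "\<beta> \<in> A \<rightarrow> carrier M"
    and f: "f \<in> carrier (free_mod R A)" and g: "g \<in> carrier (free_mod R A)"
  shows "free_lift R M \<beta> (\<lambda>z. f z \<oplus> g z) = free_lift R M \<beta> f \<oplus>\<^bsub>M\<^esub> free_lift R M \<beta> g"
proof -
  define Z where "Z = {z. f z \<noteq> \<zero>} \<union> {z. g z \<noteq> \<zero>}"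
  have Z: "finite Z" "Z \<subseteq> A" unfolding Z_def using free_mod_memD(2,3)[OF f] free_mod_memD(2,3)[OF g] by auto
  interpret F: module R "free_mod R A" by (rule free_mod_module[OF is_cring])
  have fg: "(\<lambda>z. f z \<oplus> g z) \<in> carrier (free_mod R A)"
    using F.add.m_closed[OF f g] by (simp add: free_mod_ops)
  have c: "(\<lambda>z. f z \<odot>\<^bsub>M\<^esub> \<beta> z) \<in> Z \<rightarrow> carrier M" "(\<lambda>z. g z \<odot>\<^bsub>M\<^esub> \<beta> z) \<in> Z \<rightarrow> carrier M"
    using Z(2) \<beta> free_mod_memD(1)[OF f] free_mod_memD(1)[OF g] by (auto simp: Pi_iff subset_iff)
  have "free_lift R M \<beta> (\<lambda>z. f z \<oplus> g z) = (\<Oplus>\<^bsub>M\<^esub> z \<in> Z. (f z \<oplus> g z) \<odot>\<^bsub>M\<^esub> \<beta> z)"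
    by (rule free_lift_eq_finsum[OF \<beta> fg Z(1) _ Z(2)])
      (use free_mod_memD(1)[OF f] free_mod_memD(1)[OF g] in \<open>auto simp: Z_def\<close>)
  also have "\<dots> = (\<Oplus>\<^bsub>M\<^esub> z \<in> Z. f z \<odot>\<^bsub>M\<^esub> \<beta> z \<oplus>\<^bsub>M\<^esub> g z \<odot>\<^bsub>M\<^esub> \<beta> z)"
    using Z(2) \<beta> free_mod_memD(1)[OF f] free_mod_memD(1)[OF g]
    by (intro finsum_cong') (auto simp: smult_l_distr Pi_iff subset_iff)
  also have "\<dots> = (\<Oplus>\<^bsub>M\<^esub> z \<in> Z. f z \<odot>\<^bsub>M\<^esub> \<beta> z) \<oplus>\<^bsub>M\<^esub> (\<Oplus>\<^bsub>M\<^esub> z \<in> Z. g z \<odot>\<^bsub>M\<^esub> \<beta> z)"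
    by (rule finsum_addf[OF c])
  also have "\<dots> = free_lift R M \<beta> f \<oplus>\<^bsub>M\<^esub> free_lift R M \<beta> g"
    using free_lift_eq_finsum[OF \<beta> f Z(1) _ Z(2)] free_lift_eq_finsum[OF \<beta> g Z(1) _ Z(2)]
    unfolding Z_def by auto
  finally show ?thesis .
qed

lemma free_lift_smult:
  assumes \<beta>: "\<beta> \<in> A \<rightarrow> carrier M" and r: "r \<in> carrier R" and f: "f \<in> carrier (free_mod R A)"
  shows "free_lift R M \<beta> (\<lambda>z. r \<otimes> f z) = r \<odot>\<^bsub>M\<^esub> free_lift R M \<beta> f"
proof -
  define Z where "Z = {z. f z \<noteq> \<zero>}"
  have Z: "finite Z" "Z \<subseteq> A" unfolding Z_def using free_mod_memD(2,3)[OF f] by auto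
  interpret F: module R "free_mod R A" by (rule free_mod_module[OF is_cring])
  have rf: "(\<lambda>z. r \<otimes> f z) \<in> carrier (free_mod R A)"
    using F.smult_closed[OF r f] by (simp add: free_mod_ops)
  have c: "(\<lambda>z. f z \<odot>\<^bsub>M\<^esub> \<beta> z) \<in> Z \<rightarrow> carrier M"
    using Z(2) \<beta> free_mod_memD(1)[OF f] by (auto simp: Pi_iff subset_iff)
  have "free_lift R M \<beta> (\<lambda>z. r \<otimes> f z) = (\<Oplus>\<^bsub>M\<^esub> z \<in> Z. (r \<otimes> f z) \<odot>\<^bsub>M\<^esub> \<beta> z)"
    by (rule free_lift_eq_finsum[OF \<beta> rf Z(1) _ Z(2)]) (use r free_mod_memD(1)[OF f] in \<open>auto simp: Z_def\<close>)
  also have "\<dots> = (\<Oplus>\<^bsub>M\<^esub> z \<in> Z. r \<odot>\<^bsub>M\<^esub> (f z \<odot>\<^bsub>M\<^esub> \<beta> z))"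
    using Z(2) \<beta> r free_mod_memD(1)[OF f] by (intro finsum_cong') (auto simp: smult_assoc1 Pi_iff subset_iff)
  also have "\<dots> = r \<odot>\<^bsub>M\<^esub> free_lift R M \<beta> f"
    unfolding free_lift_def Z_def[symmetric] by (rule finsum_smult_ldistr[symmetric, OF Z(1) r c])
  finally show ?thesis .
qed

lemma free_lift_diff:
  assumes \<beta>: "\<beta> \<in> A \<rightarrow> carrier M"
    and f: "f \<in> carrier (free_mod R A)" and g: "g \<in> carrier (free_mod R A)"
  shows "free_lift R M \<beta> (\<lambda>z. f z \<ominus> g z) = free_lift R M \<beta> f \<ominus>\<^bsub>M\<^esub> free_lift R M \<beta> g"
proof -
  interpret F: module R "free_mod R A" by (rule free_mod_module[OF is_cring])
  have g': "(\<lambda>z. (\<ominus> \<one>) \<otimes> g z) \<in> carrier (free_mod R A)"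
    using F.smult_closed[OF _ g] by (simp add: free_mod_ops)
  have "(\<lambda>z. f z \<ominus> g z) = (\<lambda>z. f z \<oplus> (\<ominus> \<one>) \<otimes> g z)"
    using free_mod_memD(1)[OF g] by (simp add: a_minus_def R.l_minus)
  then have "free_lift R M \<beta> (\<lambda>z. f z \<ominus> g z) = free_lift R M \<beta> f \<oplus>\<^bsub>M\<^esub> (\<ominus> \<one>) \<odot>\<^bsub>M\<^esub> free_lift R M \<beta> g"
    using free_lift_add[OF \<beta> f g'] free_lift_smult[OF \<beta> _ g] by simp
  then show ?thesis
    using free_lift_closed[OF \<beta> g] by (simp add: a_minus_def smult_l_minus)
qed

lemma free_lift_delta:
  assumes "\<beta> \<in> A \<rightarrow> carrier M" "c \<in> A"
  shows "free_lift R M \<beta> (delta R c) = \<beta> c"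
proof -
  have "{z. delta R c z \<noteq> \<zero>} \<subseteq> {c}" by (auto simp: delta_def)
  then have "free_lift R M \<beta> (delta R c) = (\<Oplus>\<^bsub>M\<^esub> z \<in> {c}. delta R c z \<odot>\<^bsub>M\<^esub> \<beta> z)"
    using assms by (intro free_lift_eq_finsum free_mod_memI[of _ _ "{c}"]) (auto simp: delta_def)
  moreover have "\<beta> c \<in> carrier M" using assms by blast
  ultimately show ?thesis by (simp add: delta_def)
qed

lemma free_lift_preimage_submodule:
  assumes \<beta>: "\<beta> \<in> A \<rightarrow> carrier M" and U: "submodule U R M"
  shows "submodule {f \<in> carrier (free_mod R A). free_lift R M \<beta> f \<in> U} R (free_mod R A)"
proof -
  interpret F: module R "free_mod R A" by (rule free_mod_module[OF is_cring])
  show ?thesis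
  proof (rule F.submoduleI, unfold free_mod_ops)
    show "(\<lambda>z. \<zero>) \<in> {f \<in> carrier (free_mod R A). free_lift R M \<beta> f \<in> U}"
      using F.zero_closed submodule_zero_closed[OF U] by (simp add: free_mod_ops free_lift_def)
  next
    fix f assume f: "f \<in> {f \<in> carrier (free_mod R A). free_lift R M \<beta> f \<in> U}"
    have "\<ominus>\<^bsub>free_mod R A\<^esub> f = (\<ominus> \<one>) \<odot>\<^bsub>free_mod R A\<^esub> f"
      using F.smult_l_minus[of \<one> f] f by simp
    then have "\<ominus>\<^bsub>free_mod R A\<^esub> f = (\<lambda>z. (\<ominus> \<one>) \<otimes> f z)" by (simp add: free_mod_ops)
    then show "\<ominus>\<^bsub>free_mod R A\<^esub> f \<in> {f \<in> carrier (free_mod R A). free_lift R M \<beta> f \<in> U}"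
      using f free_lift_smult[OF \<beta> _, of "\<ominus> \<one>" f] submoduleE(4)[OF U] F.smult_closed[of "\<ominus> \<one>" f]
      by (auto simp: free_mod_ops)
  next
    fix f g assume "f \<in> {f \<in> carrier (free_mod R A). free_lift R M \<beta> f \<in> U}"
      "g \<in> {f \<in> carrier (free_mod R A). free_lift R M \<beta> f \<in> U}"
    then show "(\<lambda>z. f z \<oplus> g z) \<in> {f \<in> carrier (free_mod R A). free_lift R M \<beta> f \<in> U}"
      using free_lift_add[OF \<beta>] submoduleE(5)[OF U] F.add.m_closed[of f g] by (auto simp: free_mod_ops)
  next
    fix r f assume "r \<in> carrier R" "f \<in> {f \<in> carrier (free_mod R A). free_lift R M \<beta> f \<in> U}"
    then show "(\<lambda>z. r \<otimes> f z) \<in> {f \<in> carrier (free_mod R A). free_lift R M \<beta> f \<in> U}"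
      using free_lift_smult[OF \<beta>] submoduleE(4)[OF U] F.smult_closed[of r f] by (auto simp: free_mod_ops)
  qed blast
qed

end

section \<open>The tensor product\<close>

locale tensor_setup = R: cring R + M: module R M + N: module R N
  for R :: "('a, 'r) ring_scheme" (structure)
    and M :: "('a, 'm, 'x) module_scheme"
    and N :: "('a, 'n, 'y) module_scheme"
begin

abbreviation "F \<equiv> free_mod R (carrier M \<times> carrier N)"
abbreviation "K \<equiv> tensor_kernel R M N"
abbreviation "cls \<equiv> tensor_cls R M N"
abbreviation "T \<equiv> tensor R M N"
abbreviation tmul :: "'m \<Rightarrow> 'n \<Rightarrow> ('m \<times> 'n \<Rightarrow> 'a) set" where
  "tmul m n \<equiv> cls (delta R (m, n))"

sublocale F: module R F
  by (rule free_mod_module[OF R.is_cring])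

lemma F_memD: "f \<in> carrier F \<Longrightarrow> f z \<in> carrier R"
  by (rule free_mod_memD(1))

lemma F_neg:
  assumes f: "f \<in> carrier F"
  shows "\<ominus>\<^bsub>F\<^esub> f = (\<lambda>z. \<ominus> f z)"
proof -
  have "\<ominus>\<^bsub>F\<^esub> f = (\<ominus> \<one>) \<odot>\<^bsub>F\<^esub> f" using F.smult_l_minus[of \<one> f] f by simp
  then show ?thesis using F_memD[OF f] by (simp add: free_mod_ops(3) R.l_minus)
qed

lemma F_add_closed: "f \<in> carrier F \<Longrightarrow> g \<in> carrier F \<Longrightarrow> (\<lambda>z. f z \<oplus> g z) \<in> carrier F"
  using F.add.m_closed[of f g] by (simp add: free_mod_ops)

lemma F_smult_closed: "r \<in> carrier R \<Longrightarrow> f \<in> carrier F \<Longrightarrow> (\<lambda>z. r \<otimes> f z) \<in> carrier F"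
  using F.smult_closed[of r f] by (simp add: free_mod_ops)

lemma F_zero_closed: "(\<lambda>z. \<zero>) \<in> carrier F"
  using F.zero_closed by (simp add: free_mod_ops)

lemma F_diff_closed: "f \<in> carrier F \<Longrightarrow> g \<in> carrier F \<Longrightarrow> (\<lambda>z. f z \<ominus> g z) \<in> carrier F"
  using F.minus_closed[of f g] by (simp add: a_minus_def F_neg free_mod_ops(2))

lemma delta_closed: "m \<in> carrier M \<Longrightarrow> n \<in> carrier N \<Longrightarrow> delta R (m, n) \<in> carrier F"
  by (rule free_mod_memI[of _ _ "{(m, n)}"]) (auto simp: delta_def)

lemma tensor_rels_subset_carrier: "tensor_rels R M N \<subseteq> carrier F"
  unfolding tensor_rels_def
  by (intro Un_least subsetI; elim CollectE exE conjE; simp only:)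
    (intro F_diff_closed F_smult_closed delta_closed M.add.m_closed N.add.m_closed
      M.smult_closed N.smult_closed; assumption)+

lemma K_submodule: "submodule K R F"
  unfolding tensor_kernel_def
  by (rule F.submodule_Inter) (use F.carrier_is_submodule tensor_rels_subset_carrier in auto)

lemma K_least: "submodule H R F \<Longrightarrow> tensor_rels R M N \<subseteq> H \<Longrightarrow> K \<subseteq> H"
  unfolding tensor_kernel_def by blast

lemma tensor_rels_subset_K: "tensor_rels R M N \<subseteq> K"
  unfolding tensor_kernel_def by blast

lemma K_subset_carrier: "f \<in> K \<Longrightarrow> f \<in> carrier F"
  using F.submoduleE(1)[OF K_submodule] by blast

lemma K_zero: "(\<lambda>z. \<zero>) \<in> K"
  using F.submodule_zero_closed[OF K_submodule] by (simp add: free_mod_ops)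

lemma K_add: "f \<in> K \<Longrightarrow> g \<in> K \<Longrightarrow> (\<lambda>z. f z \<oplus> g z) \<in> K"
  using F.submoduleE(5)[OF K_submodule, of f g] by (simp add: free_mod_ops)

lemma K_smult: "r \<in> carrier R \<Longrightarrow> f \<in> K \<Longrightarrow> (\<lambda>z. r \<otimes> f z) \<in> K"
  using F.submoduleE(4)[OF K_submodule, of r f] by (simp add: free_mod_ops)

lemma K_diff: "f \<in> K \<Longrightarrow> g \<in> K \<Longrightarrow> (\<lambda>z. f z \<ominus> g z) \<in> K"
  using K_add[of f "\<lambda>z. \<ominus> g z"] F.submoduleE(3)[OF K_submodule, of g] F_neg[OF K_subset_carrier, of g]
  by (simp add: a_minus_def)

lemma K_cong: "f \<in> K \<Longrightarrow> (\<And>z. g z = f z) \<Longrightarrow> g \<in> K"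
  by (metis ext)

lemma cls_self: "f \<in> carrier F \<Longrightarrow> f \<in> cls f"
  using K_cong[OF K_zero] by (simp add: tensor_cls_def F_memD)

lemma cls_eq_iff:
  assumes f: "f \<in> carrier F" and g: "g \<in> carrier F"
  shows "cls f = cls g \<longleftrightarrow> (\<lambda>z. f z \<ominus> g z) \<in> K"
proof
  assume "cls f = cls g"
  then have "f \<in> cls g" using cls_self[OF f] by simp
  then show "(\<lambda>z. f z \<ominus> g z) \<in> K" by (simp add: tensor_cls_def)
next
  assume fg: "(\<lambda>z. f z \<ominus> g z) \<in> K"
  have "(\<lambda>z. h z \<ominus> g z) \<in> K \<longleftrightarrow> (\<lambda>z. h z \<ominus> f z) \<in> K" if h: "h \<in> carrier F" for h
  proof
    assume "(\<lambda>z. h z \<ominus> g z) \<in> K"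
    from K_diff[OF this fg] show "(\<lambda>z. h z \<ominus> f z) \<in> K"
      by (rule K_cong) (use F_memD[OF f] F_memD[OF g] F_memD[OF h] in algebra)
  next
    assume "(\<lambda>z. h z \<ominus> f z) \<in> K"
    from K_add[OF this fg] show "(\<lambda>z. h z \<ominus> g z) \<in> K"
      by (rule K_cong) (use F_memD[OF f] F_memD[OF g] F_memD[OF h] in algebra)
  qed
  then show "cls f = cls g" unfolding tensor_cls_def by blast
qed

lemma T_carrier: "carrier T = cls ` carrier F"
  and T_zero: "\<zero>\<^bsub>T\<^esub> = cls (\<lambda>z. \<zero>)"
  by (simp_all add: tensor_def)

lemma T_add:
  assumes f: "f \<in> carrier F" and g: "g \<in> carrier F"
  shows "cls f \<oplus>\<^bsub>T\<^esub> cls g = cls (\<lambda>z. f z \<oplus> g z)"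
proof -
  have "cls f \<oplus>\<^bsub>T\<^esub> cls g
      = {h \<in> carrier F. \<exists>f' \<in> cls f. \<exists>g' \<in> cls g. (\<lambda>z. h z \<ominus> (f' z \<oplus> g' z)) \<in> K}"
    by (simp add: tensor_def)
  also have "\<dots> = cls (\<lambda>z. f z \<oplus> g z)"
  proof (intro equalityI subsetI)
    fix h assume "h \<in> {h \<in> carrier F. \<exists>f' \<in> cls f. \<exists>g' \<in> cls g. (\<lambda>z. h z \<ominus> (f' z \<oplus> g' z)) \<in> K}"
    then obtain f' g' where h: "h \<in> carrier F" and f': "f' \<in> carrier F" "(\<lambda>z. f' z \<ominus> f z) \<in> K"
      and g': "g' \<in> carrier F" "(\<lambda>z. g' z \<ominus> g z) \<in> K" and hK: "(\<lambda>z. h z \<ominus> (f' z \<oplus> g' z)) \<in> K"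
      by (auto simp: tensor_cls_def)
    from K_add[OF K_add[OF hK f'(2)] g'(2)] have "(\<lambda>z. h z \<ominus> (f z \<oplus> g z)) \<in> K"
      by (rule K_cong) (use F_memD[OF f] F_memD[OF g] F_memD[OF h] F_memD[OF f'(1)] F_memD[OF g'(1)] in algebra)
    then show "h \<in> cls (\<lambda>z. f z \<oplus> g z)" using h by (simp add: tensor_cls_def)
  next
    fix h assume "h \<in> cls (\<lambda>z. f z \<oplus> g z)"
    then show "h \<in> {h \<in> carrier F. \<exists>f' \<in> cls f. \<exists>g' \<in> cls g. (\<lambda>z. h z \<ominus> (f' z \<oplus> g' z)) \<in> K}"
      using cls_self[OF f] cls_self[OF g] by (auto simp: tensor_cls_def)
  qed
  finally show ?thesis .
qed

lemma T_smult:
  assumes r: "r \<in> carrier R" and f: "f \<in> carrier F"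
  shows "r \<odot>\<^bsub>T\<^esub> cls f = cls (\<lambda>z. r \<otimes> f z)"
proof -
  have "r \<odot>\<^bsub>T\<^esub> cls f = {h \<in> carrier F. \<exists>f' \<in> cls f. (\<lambda>z. h z \<ominus> r \<otimes> f' z) \<in> K}"
    by (simp add: tensor_def)
  also have "\<dots> = cls (\<lambda>z. r \<otimes> f z)"
  proof (intro equalityI subsetI)
    fix h assume "h \<in> {h \<in> carrier F. \<exists>f' \<in> cls f. (\<lambda>z. h z \<ominus> r \<otimes> f' z) \<in> K}"
    then obtain f' where h: "h \<in> carrier F" and f': "f' \<in> carrier F" "(\<lambda>z. f' z \<ominus> f z) \<in> K"
      and hK: "(\<lambda>z. h z \<ominus> r \<otimes> f' z) \<in> K"
      by (auto simp: tensor_cls_def)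
    from K_add[OF hK K_smult[OF r f'(2)]] have "(\<lambda>z. h z \<ominus> r \<otimes> f z) \<in> K"
      by (rule K_cong) (use r F_memD[OF f] F_memD[OF h] F_memD[OF f'(1)] in algebra)
    then show "h \<in> cls (\<lambda>z. r \<otimes> f z)" using h by (simp add: tensor_cls_def)
  next
    fix h assume "h \<in> cls (\<lambda>z. r \<otimes> f z)"
    then show "h \<in> {h \<in> carrier F. \<exists>f' \<in> cls f. (\<lambda>z. h z \<ominus> r \<otimes> f' z) \<in> K}"
      using cls_self[OF f] by (auto simp: tensor_cls_def)
  qed
  finally show ?thesis .
qed

lemma T_smult_F: "r \<in> carrier R \<Longrightarrow> f \<in> carrier F \<Longrightarrow> r \<odot>\<^bsub>T\<^esub> cls f = cls (r \<odot>\<^bsub>F\<^esub> f)"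
  using T_smult by (simp add: free_mod_ops(3))

lemma T_module: "module R T"
proof (rule moduleI[OF R.is_cring], rule abelian_groupI, unfold T_carrier)
  fix x y assume "x \<in> cls ` carrier F" "y \<in> cls ` carrier F"
  then obtain f g where fg: "f \<in> carrier F" "g \<in> carrier F" "x = cls f" "y = cls g" by blast
  then show "x \<oplus>\<^bsub>T\<^esub> y \<in> cls ` carrier F" by (simp add: T_add F_add_closed)
  show "x \<oplus>\<^bsub>T\<^esub> y = y \<oplus>\<^bsub>T\<^esub> x"
    using fg F_memD[OF fg(1)] F_memD[OF fg(2)] by (simp add: T_add R.a_comm)
  fix a assume a: "a \<in> carrier R"
  show "a \<odot>\<^bsub>T\<^esub> (x \<oplus>\<^bsub>T\<^esub> y) = a \<odot>\<^bsub>T\<^esub> x \<oplus>\<^bsub>T\<^esub> a \<odot>\<^bsub>T\<^esub> y"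
    using fg a F_memD[OF fg(1)] F_memD[OF fg(2)]
    by (simp add: T_add T_smult F_add_closed F_smult_closed R.r_distr)
next
  fix x y z assume "x \<in> cls ` carrier F" "y \<in> cls ` carrier F" "z \<in> cls ` carrier F"
  then obtain f g h where "f \<in> carrier F" "g \<in> carrier F" "h \<in> carrier F" "x = cls f" "y = cls g" "z = cls h"
    by blast
  then show "x \<oplus>\<^bsub>T\<^esub> y \<oplus>\<^bsub>T\<^esub> z = x \<oplus>\<^bsub>T\<^esub> (y \<oplus>\<^bsub>T\<^esub> z)"
    by (simp add: T_add F_add_closed R.a_assoc F_memD)
next
  fix x assume "x \<in> cls ` carrier F"
  then obtain f where f: "f \<in> carrier F" "x = cls f" by blast
  show "\<zero>\<^bsub>T\<^esub> \<oplus>\<^bsub>T\<^esub> x = x" using f F_memD[OF f(1)] by (simp add: T_zero T_add F_zero_closed)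
  show "\<exists>y \<in> cls ` carrier F. y \<oplus>\<^bsub>T\<^esub> x = \<zero>\<^bsub>T\<^esub>"
  proof (rule bexI[of _ "cls (\<lambda>z. \<ominus> f z)"])
    have "(\<lambda>z. \<ominus> f z) \<in> carrier F" using F.add.inv_closed[OF f(1)] F_neg[OF f(1)] by simp
    then show "cls (\<lambda>z. \<ominus> f z) \<oplus>\<^bsub>T\<^esub> x = \<zero>\<^bsub>T\<^esub>" "cls (\<lambda>z. \<ominus> f z) \<in> cls ` carrier F"
      using f F_memD[OF f(1)] by (simp_all add: T_zero T_add R.l_neg)
  qed
  show "\<one> \<odot>\<^bsub>T\<^esub> x = x" using f F_memD[OF f(1)] by (simp add: T_smult)
  fix a b assume ab: "a \<in> carrier R" "b \<in> carrier R"
  show "a \<odot>\<^bsub>T\<^esub> x \<in> cls ` carrier F" using f ab by (simp add: T_smult F_smult_closed)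
  show "(a \<oplus> b) \<odot>\<^bsub>T\<^esub> x = a \<odot>\<^bsub>T\<^esub> x \<oplus>\<^bsub>T\<^esub> b \<odot>\<^bsub>T\<^esub> x"
    using f ab F_memD[OF f(1)] by (simp add: T_add T_smult F_smult_closed R.l_distr)
  show "(a \<otimes> b) \<odot>\<^bsub>T\<^esub> x = a \<odot>\<^bsub>T\<^esub> (b \<odot>\<^bsub>T\<^esub> x)"
    using f ab F_memD[OF f(1)] by (simp add: T_smult F_smult_closed R.m_assoc)
qed (simp add: T_zero F_zero_closed)

sublocale T: module R T
  by (rule T_module)

lemma tmul_closed: "m \<in> carrier M \<Longrightarrow> n \<in> carrier N \<Longrightarrow> tmul m n \<in> carrier T"
  using delta_closed by (simp add: T_carrier)

lemma tensor_generated_by_tmul: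
  "carrier T = T.gen_submodule {tmul m n | m n. m \<in> carrier M \<and> n \<in> carrier N}"
    (is "_ = T.gen_submodule ?G")
proof
  have G: "?G \<subseteq> carrier T" using tmul_closed by blast
  then show "T.gen_submodule ?G \<subseteq> carrier T" by (rule T.gen_submodule_subset_carrier)
  note sub = T.gen_submodule_submodule[OF G]
  show "carrier T \<subseteq> T.gen_submodule ?G"
  proof
    fix x assume "x \<in> carrier T"
    then obtain f where f: "f \<in> carrier F" "x = cls f" by (auto simp: T_carrier)
    have "cls f \<in> T.gen_submodule ?G"
      using R.is_cring f(1)
    proof (induction f rule: free_mod_induct)
      case zero
      show ?case using T.submodule_zero_closed[OF sub] by (simp add: T_zero)
    next
      case (add f g)
      then show ?case using T.submoduleE(5)[OF sub add(3,4)] T_add[OF add(1,2)] by simp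
    next
      case (smult r f)
      then show ?case using T.submoduleE(4)[OF sub smult(1,3)] T_smult[OF smult(1,2)] by simp
    next
      case (delta c)
      then show ?case using T.gen_submodule_incl[of ?G] by auto
    qed
    then show "x \<in> T.gen_submodule ?G" using f(2) by simp
  qed
qed

lemma tmul_add_left:
  assumes "m \<in> carrier M" "m' \<in> carrier M" "n \<in> carrier N"
  shows "tmul (m \<oplus>\<^bsub>M\<^esub> m') n = tmul m n \<oplus>\<^bsub>T\<^esub> tmul m' n"
proof -
  have d: "delta R (m \<oplus>\<^bsub>M\<^esub> m', n) \<in> carrier F" "delta R (m, n) \<in> carrier F" "delta R (m', n) \<in> carrier F"
    using assms by (auto intro!: delta_closed)
  have "(\<lambda>z. delta R (m \<oplus>\<^bsub>M\<^esub> m', n) z \<ominus> delta R (m, n) z \<ominus> delta R (m', n) z) \<in> K"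
    using tensor_rels_subset_K assms unfolding tensor_rels_def by blast
  then have "(\<lambda>z. delta R (m \<oplus>\<^bsub>M\<^esub> m', n) z \<ominus> (delta R (m, n) z \<oplus> delta R (m', n) z)) \<in> K"
    by (rule K_cong) (use F_memD[OF d(1)] F_memD[OF d(2)] F_memD[OF d(3)] in algebra)
  then show ?thesis
    using cls_eq_iff[OF d(1) F_add_closed[OF d(2,3)]] T_add[OF d(2,3)] by simp
qed

lemma tmul_smult_left:
  assumes "r \<in> carrier R" "m \<in> carrier M" "n \<in> carrier N"
  shows "tmul (r \<odot>\<^bsub>M\<^esub> m) n = r \<odot>\<^bsub>T\<^esub> tmul m n"
proof -
  have d: "delta R (r \<odot>\<^bsub>M\<^esub> m, n) \<in> carrier F" "delta R (m, n) \<in> carrier F"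
    using assms by (auto intro!: delta_closed)
  have "(\<lambda>z. delta R (r \<odot>\<^bsub>M\<^esub> m, n) z \<ominus> r \<otimes> delta R (m, n) z) \<in> K"
    using tensor_rels_subset_K assms unfolding tensor_rels_def by blast
  then show ?thesis
    using cls_eq_iff[OF d(1) F_smult_closed[OF assms(1) d(2)]] T_smult[OF assms(1) d(2)] by simp
qed

lemma tmul_smult_right:
  assumes "r \<in> carrier R" "m \<in> carrier M" "n \<in> carrier N"
  shows "tmul m (r \<odot>\<^bsub>N\<^esub> n) = r \<odot>\<^bsub>T\<^esub> tmul m n"
proof -
  have d: "delta R (m, r \<odot>\<^bsub>N\<^esub> n) \<in> carrier F" "delta R (m, n) \<in> carrier F"
    using assms by (auto intro!: delta_closed)
  have "(\<lambda>z. delta R (m, r \<odot>\<^bsub>N\<^esub> n) z \<ominus> r \<otimes> delta R (m, n) z) \<in> K"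
    using tensor_rels_subset_K assms unfolding tensor_rels_def by blast
  then show ?thesis
    using cls_eq_iff[OF d(1) F_smult_closed[OF assms(1) d(2)]] T_smult[OF assms(1) d(2)] by simp
qed

lemma tmul_zero_left: "n \<in> carrier N \<Longrightarrow> tmul \<zero>\<^bsub>M\<^esub> n = \<zero>\<^bsub>T\<^esub>"
  using tmul_smult_left[of \<zero> "\<zero>\<^bsub>M\<^esub>" n] tmul_closed[of "\<zero>\<^bsub>M\<^esub>" n] by simp

lemma tmul_zero_right: "m \<in> carrier M \<Longrightarrow> tmul m \<zero>\<^bsub>N\<^esub> = \<zero>\<^bsub>T\<^esub>"
  using tmul_smult_right[of \<zero> m "\<zero>\<^bsub>N\<^esub>"] tmul_closed[of m "\<zero>\<^bsub>N\<^esub>"] by simp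

lemma tensor_kernel_subset_lift_preimage:
  fixes L :: "('a, 'e, 'z) module_scheme"
  assumes L: "module R L" and U: "submodule U R L" and \<beta>: "\<beta> \<in> carrier M \<times> carrier N \<rightarrow> carrier L"
    and add_left: "\<And>m m' n. m \<in> carrier M \<Longrightarrow> m' \<in> carrier M \<Longrightarrow> n \<in> carrier N \<Longrightarrow>
      \<beta> (m \<oplus>\<^bsub>M\<^esub> m', n) \<ominus>\<^bsub>L\<^esub> \<beta> (m, n) \<ominus>\<^bsub>L\<^esub> \<beta> (m', n) \<in> U"
    and add_right: "\<And>m n n'. m \<in> carrier M \<Longrightarrow> n \<in> carrier N \<Longrightarrow> n' \<in> carrier N \<Longrightarrow>
      \<beta> (m, n \<oplus>\<^bsub>N\<^esub> n') \<ominus>\<^bsub>L\<^esub> \<beta> (m, n) \<ominus>\<^bsub>L\<^esub> \<beta> (m, n') \<in> U"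
    and smult_left: "\<And>r m n. r \<in> carrier R \<Longrightarrow> m \<in> carrier M \<Longrightarrow> n \<in> carrier N \<Longrightarrow>
      \<beta> (r \<odot>\<^bsub>M\<^esub> m, n) \<ominus>\<^bsub>L\<^esub> r \<odot>\<^bsub>L\<^esub> \<beta> (m, n) \<in> U"
    and smult_right: "\<And>r m n. r \<in> carrier R \<Longrightarrow> m \<in> carrier M \<Longrightarrow> n \<in> carrier N \<Longrightarrow>
      \<beta> (m, r \<odot>\<^bsub>N\<^esub> n) \<ominus>\<^bsub>L\<^esub> r \<odot>\<^bsub>L\<^esub> \<beta> (m, n) \<in> U"
  shows "K \<subseteq> {f \<in> carrier F. free_lift R L \<beta> f \<in> U}"
proof (rule K_least[OF module.free_lift_preimage_submodule[OF L \<beta> U]])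
  interpret L: module R L by fact
  note lift_diff = L.free_lift_diff[OF \<beta>] and lift_smult = L.free_lift_smult[OF \<beta>]
  have lift_delta: "free_lift R L \<beta> (delta R (m, n)) = \<beta> (m, n)"
    if "m \<in> carrier M" "n \<in> carrier N" for m n
    using L.free_lift_delta[OF \<beta>] that by simp
  show "tensor_rels R M N \<subseteq> {f \<in> carrier F. free_lift R L \<beta> f \<in> U}"
  proof
    fix x assume x: "x \<in> tensor_rels R M N"
    then have "free_lift R L \<beta> x \<in> U" unfolding tensor_rels_def
      by (elim UnE CollectE exE conjE)
        (simp_all add: lift_diff lift_smult lift_delta F_diff_closed F_smult_closed delta_closed
          add_left add_right smult_left smult_right)
    then show "x \<in> {f \<in> carrier F. free_lift R L \<beta> f \<in> U}"
      using x tensor_rels_subset_carrier by blast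
  qed
qed

lemma cls_in_image_iff:
  assumes V: "submodule V R F" and KV: "K \<subseteq> V" and g: "g \<in> carrier F"
  shows "cls g \<in> cls ` V \<longleftrightarrow> g \<in> V"
proof
  assume "cls g \<in> cls ` V"
  then obtain f where f: "f \<in> V" "cls g = cls f" by blast
  have fF: "f \<in> carrier F" using f(1) F.submoduleE(1)[OF V] by blast
  have "(\<lambda>z. g z \<ominus> f z) \<in> V" using cls_eq_iff[OF g fF] f(2) KV by blast
  moreover have "(\<lambda>z. g z \<ominus> f z) \<oplus>\<^bsub>F\<^esub> f = g"
    using F_memD[OF g] F_memD[OF fF] by (simp add: free_mod_ops(2) a_minus_def R.a_assoc R.l_neg)
  ultimately show "g \<in> V" using F.submoduleE(5)[OF V] f(1) by metis
qed blast

lemma cls_image_submodule: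
  assumes V: "submodule V R F"
  shows "submodule (cls ` V) R T"
proof (rule T.submoduleI)
  have Vc: "V \<subseteq> carrier F" using F.submoduleE(1)[OF V] .
  then show "cls ` V \<subseteq> carrier T" by (auto simp: T_carrier)
  show "\<zero>\<^bsub>T\<^esub> \<in> cls ` V" using F.submodule_zero_closed[OF V] by (simp add: T_zero free_mod_ops(1))
  fix x y assume "x \<in> cls ` V" "y \<in> cls ` V"
  then obtain f g where fg: "f \<in> V" "g \<in> V" "x = cls f" "y = cls g" by blast
  then show "x \<oplus>\<^bsub>T\<^esub> y \<in> cls ` V"
    using T_add[of f g] F.submoduleE(5)[OF V] Vc by (auto simp: free_mod_ops(2))
  have "\<ominus>\<^bsub>T\<^esub> x = (\<ominus> \<one>) \<odot>\<^bsub>T\<^esub> cls f"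
    using T.smult_l_minus[of \<one> x] fg Vc T_carrier by auto
  then show "\<ominus>\<^bsub>T\<^esub> x \<in> cls ` V"
    using T_smult_F[of "\<ominus> \<one>" f] F.submoduleE(4)[OF V _ fg(1)] fg(1) Vc by auto
  fix r assume r: "r \<in> carrier R"
  then show "r \<odot>\<^bsub>T\<^esub> x \<in> cls ` V"
    using T_smult_F[OF r] F.submoduleE(4)[OF V r fg(1)] fg Vc by auto
qed

lemma ann_quot_cls_image:
  assumes V: "submodule V R F" and KV: "K \<subseteq> V"
  shows "ann_quot R T (cls ` V) = ann_quot R F V"
proof (intro equalityI subsetI)
  fix r assume "r \<in> ann_quot R T (cls ` V)"
  then have r: "r \<in> carrier R" and rT: "\<And>f. f \<in> carrier F \<Longrightarrow> r \<odot>\<^bsub>T\<^esub> cls f \<in> cls ` V"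
    unfolding ann_quot_def T_carrier by auto
  have "r \<odot>\<^bsub>F\<^esub> f \<in> V" if "f \<in> carrier F" for f
    using cls_in_image_iff[OF V KV F.smult_closed[OF r that]] rT[OF that] T_smult_F[OF r that] by simp
  then show "r \<in> ann_quot R F V" using r unfolding ann_quot_def by blast
next
  fix r assume "r \<in> ann_quot R F V"
  then show "r \<in> ann_quot R T (cls ` V)"
    unfolding ann_quot_def T_carrier using T_smult_F by auto
qed

section \<open>Attached primes of a tensor product\<close>

lemma tmul_preimage_submodule:
  assumes U: "submodule U R T"
  shows "submodule {m \<in> carrier M. \<forall>n \<in> carrier N. tmul m n \<in> U} R M"
proof (rule M.submoduleI)
  show "\<zero>\<^bsub>M\<^esub> \<in> {m \<in> carrier M. \<forall>n \<in> carrier N. tmul m n \<in> U}"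
    using tmul_zero_left T.submodule_zero_closed[OF U] by simp
next
  fix m assume m: "m \<in> {m \<in> carrier M. \<forall>n \<in> carrier N. tmul m n \<in> U}"
  then have "\<ominus>\<^bsub>M\<^esub> m = (\<ominus> \<one>) \<odot>\<^bsub>M\<^esub> m" using M.smult_l_minus[of \<one> m] by simp
  then show "\<ominus>\<^bsub>M\<^esub> m \<in> {m \<in> carrier M. \<forall>n \<in> carrier N. tmul m n \<in> U}"
    using m tmul_smult_left[of "\<ominus> \<one>" m] T.submoduleE(4)[OF U] by auto
next
  fix m m' assume "m \<in> {m \<in> carrier M. \<forall>n \<in> carrier N. tmul m n \<in> U}"
    "m' \<in> {m \<in> carrier M. \<forall>n \<in> carrier N. tmul m n \<in> U}"
  then show "m \<oplus>\<^bsub>M\<^esub> m' \<in> {m \<in> carrier M. \<forall>n \<in> carrier N. tmul m n \<in> U}"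
    using tmul_add_left T.submoduleE(5)[OF U] by auto
next
  fix r m assume "r \<in> carrier R" "m \<in> {m \<in> carrier M. \<forall>n \<in> carrier N. tmul m n \<in> U}"
  then show "r \<odot>\<^bsub>M\<^esub> m \<in> {m \<in> carrier M. \<forall>n \<in> carrier N. tmul m n \<in> U}"
    using tmul_smult_left T.submoduleE(4)[OF U] by auto
qed blast

lemma ann_quot_tmul_preimage:
  assumes U: "submodule U R T"
  shows "ann_quot R M {m \<in> carrier M. \<forall>n \<in> carrier N. tmul m n \<in> U} = ann_quot R T U"
proof (intro equalityI subsetI)
  fix r assume "r \<in> ann_quot R M {m \<in> carrier M. \<forall>n \<in> carrier N. tmul m n \<in> U}"
  then have r: "r \<in> carrier R"
    and rU: "\<And>m n. m \<in> carrier M \<Longrightarrow> n \<in> carrier N \<Longrightarrow> r \<odot>\<^bsub>T\<^esub> tmul m n \<in> U"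
    unfolding ann_quot_def using tmul_smult_left by auto
  have "r \<odot>\<^bsub>T\<^esub> x \<in> U" if "x \<in> carrier T" for x
    using T.smult_into_submodule_from_generators[OF tensor_generated_by_tmul U r _ that] rU by blast
  then show "r \<in> ann_quot R T U" using r unfolding ann_quot_def by blast
next
  fix r assume "r \<in> ann_quot R T U"
  then show "r \<in> ann_quot R M {m \<in> carrier M. \<forall>n \<in> carrier N. tmul m n \<in> U}"
    unfolding ann_quot_def using tmul_smult_left tmul_closed by auto
qed

lemma Att_tensor_subset_Att: "Att R T \<subseteq> Att R M"
proof
  fix P assume "P \<in> Att R T"
  then obtain U where P: "primeideal P R" and U: "submodule U R T" and PU: "P = ann_quot R T U"
    unfolding Att_def by blast
  let ?U = "{m \<in> carrier M. \<forall>n \<in> carrier N. tmul m n \<in> U}"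
  have "submodule ?U R M" and "P = ann_quot R M ?U"
    using tmul_preimage_submodule[OF U] ann_quot_tmul_preimage[OF U] PU by simp_all
  then show "P \<in> Att R M" unfolding Att_def using P by blast
qed

lemma smult_tensor_zero:
  assumes u: "u \<in> carrier R" and uN: "\<And>n. n \<in> carrier N \<Longrightarrow> u \<odot>\<^bsub>N\<^esub> n = \<zero>\<^bsub>N\<^esub>"
    and x: "x \<in> carrier T"
  shows "u \<odot>\<^bsub>T\<^esub> x = \<zero>\<^bsub>T\<^esub>"
proof -
  have "u \<odot>\<^bsub>T\<^esub> tmul m n \<in> {\<zero>\<^bsub>T\<^esub>}" if "m \<in> carrier M" "n \<in> carrier N" for m n
    using tmul_smult_right[OF u that] uN[OF that(2)] tmul_zero_right[OF that(1)] by simp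
  then show ?thesis
    using T.smult_into_submodule_from_generators[OF tensor_generated_by_tmul T.zero_submodule u _ x]
    by blast
qed

lemma Att_tensor_subset_Supp:
  assumes fg: "fin_gen_module R N"
  shows "Att R T \<subseteq> Supp R N"
proof
  fix P assume "P \<in> Att R T"
  then obtain U where P: "primeideal P R" and U: "submodule U R T" and PU: "P = ann_quot R T U"
    unfolding Att_def by blast
  show "P \<in> Supp R N"
  proof (rule ccontr)
    assume "P \<notin> Supp R N"
    then obtain u where u: "u \<in> carrier R - P" "\<forall>n \<in> carrier N. u \<odot>\<^bsub>N\<^esub> n = \<zero>\<^bsub>N\<^esub>"
      using N.annihilator_outside_prime_if_not_in_Supp[OF P fg] by blast
    then have "u \<in> ann_quot R T U"
      unfolding ann_quot_def using smult_tensor_zero T.submodule_zero_closed[OF U] by auto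
    then show False using u PU by blast
  qed
qed

lemma tensor_kernel_subset_linear_mod_preimage:
  assumes U: "submodule U R M" and PU: "P \<subseteq> ann_quot R M U" and \<phi>: "linear_mod R N P \<phi>"
  shows "K \<subseteq> {f \<in> carrier F. free_lift R M (\<lambda>(m, n). \<phi> n \<odot>\<^bsub>M\<^esub> m) f \<in> U}"
proof -
  note \<phi>c = linear_mod_closed[OF \<phi>]
  have P_kills: "p \<odot>\<^bsub>M\<^esub> m \<in> U" if "p \<in> P" "m \<in> carrier M" for p m
    using PU that unfolding ann_quot_def by blast
  have add_left: "\<phi> n \<odot>\<^bsub>M\<^esub> (m \<oplus>\<^bsub>M\<^esub> m') \<ominus>\<^bsub>M\<^esub> \<phi> n \<odot>\<^bsub>M\<^esub> m \<ominus>\<^bsub>M\<^esub> \<phi> n \<odot>\<^bsub>M\<^esub> m' \<in> U"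
    if "m \<in> carrier M" "m' \<in> carrier M" "n \<in> carrier N" for m m' n
    using M.add_diff_diff_self M.submodule_zero_closed[OF U] \<phi>c that by (simp add: M.smult_r_distr)
  have add_right: "\<phi> (n \<oplus>\<^bsub>N\<^esub> n') \<odot>\<^bsub>M\<^esub> m \<ominus>\<^bsub>M\<^esub> \<phi> n \<odot>\<^bsub>M\<^esub> m \<ominus>\<^bsub>M\<^esub> \<phi> n' \<odot>\<^bsub>M\<^esub> m \<in> U"
    if m: "m \<in> carrier M" and n: "n \<in> carrier N" "n' \<in> carrier N" for m n n'
  proof -
    have c: "\<phi> (n \<oplus>\<^bsub>N\<^esub> n') \<in> carrier R" "\<phi> n \<in> carrier R" "\<phi> n' \<in> carrier R"
      using \<phi>c n by auto
    then have "\<phi> (n \<oplus>\<^bsub>N\<^esub> n') \<ominus> (\<phi> n \<oplus> \<phi> n') = \<phi> (n \<oplus>\<^bsub>N\<^esub> n') \<ominus> \<phi> n \<ominus> \<phi> n'"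
      by algebra
    then have "(\<phi> (n \<oplus>\<^bsub>N\<^esub> n') \<ominus> (\<phi> n \<oplus> \<phi> n')) \<odot>\<^bsub>M\<^esub> m
        = \<phi> (n \<oplus>\<^bsub>N\<^esub> n') \<odot>\<^bsub>M\<^esub> m \<ominus>\<^bsub>M\<^esub> \<phi> n \<odot>\<^bsub>M\<^esub> m \<ominus>\<^bsub>M\<^esub> \<phi> n' \<odot>\<^bsub>M\<^esub> m"
      using c m by (simp add: M.smult_l_diff)
    then show ?thesis using P_kills[OF linear_mod_add[OF \<phi> n] m] by simp
  qed
  have smult_left: "\<phi> n \<odot>\<^bsub>M\<^esub> (r \<odot>\<^bsub>M\<^esub> m) \<ominus>\<^bsub>M\<^esub> r \<odot>\<^bsub>M\<^esub> (\<phi> n \<odot>\<^bsub>M\<^esub> m) \<in> U"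
    if "r \<in> carrier R" "m \<in> carrier M" "n \<in> carrier N" for r m n
  proof -
    have "\<phi> n \<odot>\<^bsub>M\<^esub> (r \<odot>\<^bsub>M\<^esub> m) = r \<odot>\<^bsub>M\<^esub> (\<phi> n \<odot>\<^bsub>M\<^esub> m)"
      using that \<phi>c by (simp add: M.smult_assoc1[symmetric] R.m_comm)
    then show ?thesis using that \<phi>c M.submodule_zero_closed[OF U] by (simp add: M.r_neg a_minus_def)
  qed
  have smult_right: "\<phi> (r \<odot>\<^bsub>N\<^esub> n) \<odot>\<^bsub>M\<^esub> m \<ominus>\<^bsub>M\<^esub> r \<odot>\<^bsub>M\<^esub> (\<phi> n \<odot>\<^bsub>M\<^esub> m) \<in> U"
    if "r \<in> carrier R" "m \<in> carrier M" "n \<in> carrier N" for r m n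
  proof -
    have "(\<phi> (r \<odot>\<^bsub>N\<^esub> n) \<ominus> r \<otimes> \<phi> n) \<odot>\<^bsub>M\<^esub> m
        = \<phi> (r \<odot>\<^bsub>N\<^esub> n) \<odot>\<^bsub>M\<^esub> m \<ominus>\<^bsub>M\<^esub> r \<odot>\<^bsub>M\<^esub> (\<phi> n \<odot>\<^bsub>M\<^esub> m)"
      using that \<phi>c by (simp add: M.smult_l_diff M.smult_assoc1)
    then show ?thesis using P_kills[OF linear_mod_smult[OF \<phi> that(1,3)] that(2)] by simp
  qed
  show ?thesis
    by (rule tensor_kernel_subset_lift_preimage[OF M.module_axioms U])
      (use \<phi>c add_left add_right smult_left smult_right in auto)
qed

lemma ann_quot_linear_mod_preimage:
  assumes P: "primeideal P R" and U: "submodule U R M" and PU: "P = ann_quot R M U"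
    and \<phi>: "linear_mod R N P \<phi>" and g: "g \<in> carrier N" and \<phi>g: "\<phi> g \<notin> P"
  shows "ann_quot R F {f \<in> carrier F. free_lift R M (\<lambda>(m, n). \<phi> n \<odot>\<^bsub>M\<^esub> m) f \<in> U} = P"
    (is "ann_quot R F ?V = P")
proof -
  interpret P: primeideal P R by fact
  note \<phi>c = linear_mod_closed[OF \<phi>]
  have \<beta>: "(\<lambda>(m, n). \<phi> n \<odot>\<^bsub>M\<^esub> m) \<in> carrier M \<times> carrier N \<rightarrow> carrier M" using \<phi>c by auto
  show ?thesis
  proof (intro equalityI subsetI)
    fix r assume "r \<in> ann_quot R F ?V"
    then have r: "r \<in> carrier R" and rV: "\<And>f. f \<in> carrier F \<Longrightarrow> r \<odot>\<^bsub>F\<^esub> f \<in> ?V"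
      unfolding ann_quot_def by auto
    have "(r \<otimes> \<phi> g) \<odot>\<^bsub>M\<^esub> m \<in> U" if m: "m \<in> carrier M" for m
      using rV[OF delta_closed[OF m g]] M.free_lift_smult[OF \<beta> r delta_closed[OF m g]]
        M.free_lift_delta[OF \<beta>] m g r \<phi>c
      by (simp add: free_mod_ops(3) M.smult_assoc1)
    then have "r \<otimes> \<phi> g \<in> P" using PU r \<phi>c[OF g] unfolding ann_quot_def by blast
    then show "r \<in> P" using P.I_prime[OF r \<phi>c[OF g]] \<phi>g by blast
  next
    fix r assume rP: "r \<in> P"
    then have r: "r \<in> carrier R" using P.a_subset by blast
    have "r \<odot>\<^bsub>M\<^esub> free_lift R M (\<lambda>(m, n). \<phi> n \<odot>\<^bsub>M\<^esub> m) f \<in> U" if f: "f \<in> carrier F" for f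
      using rP PU M.free_lift_closed[OF \<beta> f] unfolding ann_quot_def by blast
    then have "r \<odot>\<^bsub>F\<^esub> f \<in> ?V" if f: "f \<in> carrier F" for f
      using M.free_lift_smult[OF \<beta> r f] F.smult_closed[OF r f] f by (simp add: free_mod_ops(3))
    then show "r \<in> ann_quot R F ?V" using r unfolding ann_quot_def by blast
  qed
qed

lemma Att_Supp_subset_Att_tensor:
  assumes fg: "fin_gen_module R N"
  shows "Att R M \<inter> Supp R N \<subseteq> Att R T"
proof
  fix P assume "P \<in> Att R M \<inter> Supp R N"
  then obtain U where P: "primeideal P R" and U: "submodule U R M" and PU: "P = ann_quot R M U"
    and P_Supp: "P \<in> Supp R N"
    unfolding Att_def by blast
  obtain \<phi> g where g: "g \<in> carrier N" and \<phi>: "linear_mod R N P \<phi>" and \<phi>g: "\<phi> g \<notin> P"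
    using N.linear_mod_nonvanishing_exists[OF P fg P_Supp] .
  define V where "V = {f \<in> carrier F. free_lift R M (\<lambda>(m, n). \<phi> n \<odot>\<^bsub>M\<^esub> m) f \<in> U}"
  have V: "submodule V R F"
    unfolding V_def using linear_mod_closed[OF \<phi>] by (intro M.free_lift_preimage_submodule[OF _ U]) auto
  have KV: "K \<subseteq> V"
    unfolding V_def using tensor_kernel_subset_linear_mod_preimage[OF U _ \<phi>] PU by blast
  have "ann_quot R T (cls ` V) = P"
    using ann_quot_cls_image[OF V KV] ann_quot_linear_mod_preimage[OF P U PU \<phi> g \<phi>g]
    unfolding V_def by simp
  then show "P \<in> Att R T"
    unfolding Att_def using P cls_image_submodule[OF V] by blast
qed

end

theorem lemma2p12:
  fixes R :: "('a, 'r) ring_scheme"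
    and M :: "('a, 'm, 'x) module_scheme"
    and N :: "('a, 'n, 'y) module_scheme"
  assumes "cring R" and "noetherian_ring R"
    and "module R M" and "module R N"
    and "fin_gen_module R N"
  shows "Att R (tensor R M N) = Att R M \<inter> Supp R N"
proof -
  interpret tensor_setup R M N
    using assms by (simp add: tensor_setup_def)
  show ?thesis
    using Att_tensor_subset_Att Att_tensor_subset_Supp[OF assms(5)]
      Att_Supp_subset_Att_tensor[OF assms(5)]
    by blast
qed

end
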